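(* In the setting of the FedSLoP algorithm (see context), under Assumptions A1 and A2, suppose the stepsize satisfies $$\eta\le\min\Big\{\sqrt{\tfrac{1-\mu^2}{6L^2\tau^3}},\ \tfrac{1}{LS_\tau},\ \sqrt{\tfrac{\underline{\delta}(1-\mu)(1-\mu^2)S_\tau}{48L^2\tau^4}}\Big\}.$$ Then for every integer $T\ge1$, $$\frac1T\sum_{t=0}^{T-1}\mathbb{E}\big[\|\nabla f(\theta^t)\|^2\big]\le\frac{4\,(f(\theta^0)-f_* )}{\underline{\delta}\,\eta S_\tau T}+\frac{4\eta S_\tau L\sigma_L^2}{\underline{\delta}N}+\frac{48\eta^2\tau^4L^2}{\underline{\delta}^2(1-\mu)(1-\mu^2)S_\tau}(\sigma_L^2+\sigma_G^2).$$
   Context: Setting. Let $d,N,\tau$ be positive integers, $r$ an integer with $1\le r\le d$, $\underline{\delta}:=r/d\in(0,1]$, $\mu\in[0,1)$, $\eta>0$, $L>0$. Let $F_1,\dots,F_N:\mathbb{R}^d\to\mathbb{R}$ be differentiable and $f(\theta):=\frac1N\sum_{i=1}^N F_i(\theta)$. Assumption A1: $f$ is bounded below by $f_*>-\infty$, and $f$ and every $F_i$ are $L$-smooth (gradients $L$-Lipschitz). Assumption A2: each stochastic gradient $g_{i,s}=\nabla F_i(\theta_{i,s};\xi_{i,s})$ computed by the algorithm satisfies, conditionally on all randomness generated before it (including $\Pi_t$ and $\theta_{i,s}$), $\mathbb{E}[g_{i,s}]=\nabla F_i(\theta_{i,s})$ and $\mathbb{E}\|g_{i,s}-\nabla F_i(\theta_{i,s})\|^2\le\sigma_L^2$,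 the minibatch samples of different clients are conditionally independent; and $\|\nabla F_i(\theta)-\nabla f(\theta)\|^2\le\sigma_G^2$ for all $i$ and all $\theta\in\mathbb{R}^d$. Algorithm (FedSLoP, full participation). Start from a deterministic $\theta^0\in\mathbb{R}^d$. In each round $t=0,1,\dots$: sample $P_t$ from the Haar (uniform, $O(d)$-invariant) distribution on $\mathrm{St}(d,r)=\{P\in\mathbb{R}^{d\times r}:P^\top P=I_r\}$, independently of all past randomness and of data sampling, and set $\Pi_t=P_tP_t^\top$. Each client $i=1,\dots,N$ sets $\theta_{i,0}=\theta^t$, $v_{i,0}=0$, and for $s=0,\dots,\tau-1$: $v_{i,s+1}=\mu v_{i,s}+\Pi_t g_{i,s}$, $\theta_{i,s+1}=\theta_{i,s}-\eta v_{i,s+1}$. The server sets $\theta^{t+1}=\theta^t+\frac1N\sum_{i=1}^N(\theta_{i,\tau}-\theta^t)$. Notation. The momentum weights are $\alpha_{\tau,q}:=(1-\mu^{\tau-q})/(1-\mu)$ for $q=0,\dots,\tau-1$, and $S_\tau:=\sum_{q=0}^{\tau-1}\alpha_{\tau,q}$. $\mathbb{E}$ denotes full expectation over all randomness of the algorithm. *)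

theory Defs
  imports "HOL-Analysis.Analysis" "HOL-Probability.Probability"
begin

definition stiefel :: "(real^'r^'d) set" where
  "stiefel = {P. transpose P ** P = mat 1}"

definition haar_stiefel :: "(real^'r^'d) measure \<Rightarrow> bool" where
  "haar_stiefel \<mu> \<longleftrightarrow> prob_space \<mu> \<and> sets \<mu> = sets borel \<and> emeasure \<mu> stiefel = 1 \<and>
     (\<forall>Q::real^'d^'d. orthogonal_matrix Q \<longrightarrow> distr \<mu> borel (\<lambda>P. Q ** P) = \<mu>)"

fun local_iter :: "real \<Rightarrow> real \<Rightarrow> real^'d^'d \<Rightarrow> (nat \<Rightarrow> real^'d) \<Rightarrow> real^'d \<Rightarrow> nat
                   \<Rightarrow> (real^'d) \<times> (real^'d)" where
  "local_iter \<mu> \<eta> Proj gs th0 0 = (th0, 0)"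
| "local_iter \<mu> \<eta> Proj gs th0 (Suc s) =
     (let (th, v) = local_iter \<mu> \<eta> Proj gs th0 s;
          v' = \<mu> *\<^sub>R v + Proj *v gs s
      in (th - \<eta> *\<^sub>R v', v'))"

definition proj_of :: "real^'r^'d \<Rightarrow> real^'d^'d" where
  "proj_of P = P ** transpose P"

text \<open>Server iterate theta^t of FedSLoP (clients indexed 0..N-1), given the sampled
  matrices P t and the stochastic gradients g t i s (round t, client i, local step s).\<close>
fun server_iter :: "real \<Rightarrow> real \<Rightarrow> nat \<Rightarrow> nat \<Rightarrow> real^'d \<Rightarrow> (nat \<Rightarrow> real^'r^'d)
                    \<Rightarrow> (nat \<Rightarrow> nat \<Rightarrow> nat \<Rightarrow> real^'d) \<Rightarrow> nat \<Rightarrow> real^'d" where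
  "server_iter \<mu> \<eta> N \<tau> th0 P g 0 = th0"
| "server_iter \<mu> \<eta> N \<tau> th0 P g (Suc t) =
     (let th = server_iter \<mu> \<eta> N \<tau> th0 P g t
      in th + (1 / real N) *\<^sub>R
           (\<Sum>i<N. fst (local_iter \<mu> \<eta> (proj_of (P t)) (g t i) th \<tau>) - th))"

definition client_iter :: "real \<Rightarrow> real \<Rightarrow> nat \<Rightarrow> nat \<Rightarrow> real^'d \<Rightarrow> (nat \<Rightarrow> real^'r^'d)
                    \<Rightarrow> (nat \<Rightarrow> nat \<Rightarrow> nat \<Rightarrow> real^'d) \<Rightarrow> nat \<Rightarrow> nat \<Rightarrow> nat \<Rightarrow> real^'d" where
  "client_iter \<mu> \<eta> N \<tau> th0 P g t i s =
     fst (local_iter \<mu> \<eta> (proj_of (P t)) (g t i) (server_iter \<mu> \<eta> N \<tau> th0 P g t) s)"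

text \<open>sigma-algebra of all randomness generated before the stochastic gradients of local
  step s of round t: P_0..P_t, all stochastic gradients of earlier rounds, and the stochastic
  gradients of all clients at local steps < s of round t.\<close>
definition past_alg :: "'w measure \<Rightarrow> nat \<Rightarrow> nat
   \<Rightarrow> (nat \<Rightarrow> 'w \<Rightarrow> 'p::topological_space) \<Rightarrow> (nat \<Rightarrow> nat \<Rightarrow> nat \<Rightarrow> 'w \<Rightarrow> 'q::topological_space) \<Rightarrow> nat \<Rightarrow> nat
   \<Rightarrow> 'w measure" where
  "past_alg M N \<tau> P g t s = sigma (space M)
     ({P t' -` A \<inter> space M | t' A. t' \<le> t \<and> A \<in> sets borel} \<union>
      {g t' i s' -` A \<inter> space M | t' i s' A. i < N \<and> A \<in> sets borel \<and>
          ((t' < t \<and> s' < \<tau>) \<or> (t' = t \<and> s' < s))})"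

text \<open>sigma-algebra of all randomness generated before round t (before sampling P_t).\<close>
definition pre_round_alg :: "'w measure \<Rightarrow> nat \<Rightarrow> nat
   \<Rightarrow> (nat \<Rightarrow> 'w \<Rightarrow> 'p::topological_space) \<Rightarrow> (nat \<Rightarrow> nat \<Rightarrow> nat \<Rightarrow> 'w \<Rightarrow> 'q::topological_space) \<Rightarrow> nat
   \<Rightarrow> 'w measure" where
  "pre_round_alg M N \<tau> P g t = sigma (space M)
     ({P t' -` A \<inter> space M | t' A. t' < t \<and> A \<in> sets borel} \<union>
      {g t' i s' -` A \<inter> space M | t' i s' A. i < N \<and> A \<in> sets borel \<and> t' < t \<and> s' < \<tau>})"

text \<open>Conditional independence of the random variables X i (i in I) given the sigma-algebra F:
  P(X_i in B_i for all i | F) = prod_i P(X_i in B_i | F) a.s., expressed by integrating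
  against indicators of F-events.\<close>
definition cond_indep_vars :: "'w measure \<Rightarrow> 'w measure \<Rightarrow> ('i \<Rightarrow> 'w \<Rightarrow> 'b::topological_space)
   \<Rightarrow> 'i set \<Rightarrow> bool" where
  "cond_indep_vars M F X I \<longleftrightarrow>
     (\<forall>A \<in> sets F. \<forall>B. (\<forall>i\<in>I. B i \<in> sets borel) \<longrightarrow>
        (\<integral>\<omega>. indicator A \<omega> * (\<Prod>i\<in>I. indicator (B i) (X i \<omega>)) \<partial>M) =
        (\<integral>\<omega>. indicator A \<omega> * (\<Prod>i\<in>I. real_cond_exp M F (\<lambda>\<omega>'. indicator (B i) (X i \<omega>')) \<omega>) \<partial>M))"

definition S_tau :: "real \<Rightarrow> nat \<Rightarrow> real" where
  "S_tau \<mu> \<tau> = (\<Sum>q<\<tau>. (1 - \<mu> ^ (\<tau> - q)) / (1 - \<mu>))"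

end

theory Submission
  imports Defs
begin

(* Expanding the momentum recursion, client i ends round t at
   theta^t - eta sum_k alpha_{tau,k} Pi_t g_{i,k}, so the server step is
   -eta Pi_t (S grad f(theta^t) + E + Z), where E (grad_err) collects the gradient errors caused
   by client drift and Z (noise_avg) is the alpha-weighted average of the gradient noises.
   The descent lemma for the L-smooth f bounds the change of f along this step by
   -(eta S/2)|Pi_t grad f|^2 + eta L^2 (drift) + L eta^2 |Z|^2 - eta (1 - L eta S) <Pi_t grad f, Z>.
   In expectation the last term vanishes because every noise is centred given the past;
   E|Z|^2 <= sigma_L^2 S^2 / N because noises of different steps or of different clients are
   orthogonal; E|Pi_t u|^2 = delta E|u|^2 because Pi_t is independent of u and E Pi_t = delta I
   (sign flips and row swaps preserve the Haar law); and a Gronwall-type recursion over the local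
   steps bounds the drift by the gradient norm, which the stepsize condition lets us absorb.
   Telescoping over the rounds and f >= f_* give the rate. *)

section \<open>Momentum weights\<close>

definition momentum_weight :: "real \<Rightarrow> nat \<Rightarrow> nat \<Rightarrow> real" where
  "momentum_weight m s k = (\<Sum>j<s - k. m ^ j)"

lemma momentum_weight_Suc:
  "k \<le> s \<Longrightarrow> momentum_weight m (Suc s) k = momentum_weight m s k + m ^ (s - k)"
  unfolding momentum_weight_def by (simp add: Suc_diff_le)

lemma momentum_weight_self [simp]: "momentum_weight m s s = 0"
  unfolding momentum_weight_def by simp

lemma local_iter_eq:
  "local_iter m e Pr gs th0 s =
     (th0 - e *\<^sub>R (\<Sum>k<s. momentum_weight m s k *\<^sub>R (Pr *v gs k)),
      (\<Sum>k<s. m ^ (s - 1 - k) *\<^sub>R (Pr *v gs k)))"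
proof (induction s)
  case 0
  then show ?case by simp
next
  case (Suc s)
  define A where "A = (\<Sum>k<s. momentum_weight m s k *\<^sub>R (Pr *v gs k))"
  define V where "V = (\<Sum>k<Suc s. m ^ (s - k) *\<^sub>R (Pr *v gs k))"
  have "m *\<^sub>R (\<Sum>k<s. m ^ (s - 1 - k) *\<^sub>R (Pr *v gs k)) = (\<Sum>k<s. m ^ (s - k) *\<^sub>R (Pr *v gs k))"
    unfolding scaleR_sum_right
  proof (rule sum.cong)
    fix k assume "k \<in> {..<s}"
    then have "s - k = Suc (s - 1 - k)" by auto
    then show "m *\<^sub>R m ^ (s - 1 - k) *\<^sub>R (Pr *v gs k) = m ^ (s - k) *\<^sub>R (Pr *v gs k)"
      by simp
  qed simp
  then have v: "m *\<^sub>R (\<Sum>k<s. m ^ (s - 1 - k) *\<^sub>R (Pr *v gs k)) + Pr *v gs s = V"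
    by (simp add: V_def)
  have a: "A + V = (\<Sum>k<Suc s. momentum_weight m (Suc s) k *\<^sub>R (Pr *v gs k))"
    by (simp add: A_def V_def momentum_weight_Suc scaleR_add_left sum.distrib)
  have "local_iter m e Pr gs th0 (Suc s) = (th0 - e *\<^sub>R A - e *\<^sub>R V, V)"
    using Suc.IH v by (simp add: A_def Let_def)
  also have "th0 - e *\<^sub>R A - e *\<^sub>R V = th0 - e *\<^sub>R (A + V)"
    by (simp add: algebra_simps)
  finally show ?case
    using a by (simp add: V_def)
qed

lemma fst_local_iter:
  "fst (local_iter m e Pr gs th0 s) = th0 - e *\<^sub>R (\<Sum>k<s. momentum_weight m s k *\<^sub>R (Pr *v gs k))"
  by (simp add: local_iter_eq)

lemma momentum_weight_nonneg: "0 \<le> m \<Longrightarrow> 0 \<le> momentum_weight m s k"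
  unfolding momentum_weight_def by (simp add: sum_nonneg)

lemma one_le_momentum_weight:
  assumes "0 \<le> m" "k < s"
  shows "1 \<le> momentum_weight m s k"
proof -
  have "(\<Sum>j\<in>{0}. m ^ j) \<le> (\<Sum>j<s - k. m ^ j)"
    by (rule sum_mono2) (use assms in auto)
  then show ?thesis unfolding momentum_weight_def by simp
qed

lemma momentum_weight_eq: "m \<noteq> 1 \<Longrightarrow> momentum_weight m s k = (1 - m ^ (s - k)) / (1 - m)"
  unfolding momentum_weight_def by (simp add: sum_gp_strict)

lemma momentum_weight_le: "0 \<le> m \<Longrightarrow> m < 1 \<Longrightarrow> momentum_weight m s k \<le> 1 / (1 - m)"
  using momentum_weight_eq[of m s k] by (simp add: divide_right_mono)

lemma power2_lt_one: "0 \<le> (m::real) \<Longrightarrow> m < 1 \<Longrightarrow> m\<^sup>2 < 1"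
  by (simp add: abs_square_less_1)

lemma momentum_weight_sq_le:
  assumes m: "0 \<le> m" "m < 1"
  shows "(momentum_weight m s k)\<^sup>2 \<le> real (s - k) / (1 - m\<^sup>2)"
proof -
  have mm: "m\<^sup>2 < 1" using m by (rule power2_lt_one)
  have "(\<Sum>j<s - k. (m ^ j)\<^sup>2) = (\<Sum>j<s - k. (m\<^sup>2) ^ j)"
    by (simp add: power_mult[symmetric] mult.commute)
  also have "\<dots> = (1 - (m\<^sup>2) ^ (s - k)) / (1 - m\<^sup>2)"
    using mm by (simp add: sum_gp_strict)
  also have "\<dots> \<le> 1 / (1 - m\<^sup>2)"
    using m mm by (intro divide_right_mono) auto
  finally have geom: "(\<Sum>j<s - k. (m ^ j)\<^sup>2) \<le> 1 / (1 - m\<^sup>2)" .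
  have "(momentum_weight m s k)\<^sup>2 = (\<Sum>j<s - k. 1 * m ^ j)\<^sup>2"
    unfolding momentum_weight_def by simp
  also have "\<dots> \<le> (\<Sum>j<s - k. 1\<^sup>2) * (\<Sum>j<s - k. (m ^ j)\<^sup>2)"
    by (rule Cauchy_Schwarz_ineq_sum)
  also have "\<dots> \<le> real (s - k) * (1 / (1 - m\<^sup>2))"
    using mult_left_mono[OF geom, of "real (s - k)"] by simp
  finally show ?thesis by simp
qed

lemma S_tau_eq_sum_momentum_weight: "m \<noteq> 1 \<Longrightarrow> S_tau m n = (\<Sum>q<n. momentum_weight m n q)"
  unfolding S_tau_def by (simp add: momentum_weight_eq)

lemma power2_norm_add_le:
  fixes x y :: "'a::real_normed_vector"
  shows "(norm (x + y))\<^sup>2 \<le> 2 * (norm x)\<^sup>2 + 2 * (norm y)\<^sup>2"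
proof -
  have "(norm (x + y))\<^sup>2 \<le> (norm x + norm y)\<^sup>2"
    by (intro power_mono norm_triangle_ineq) auto
  also have "\<dots> \<le> 2 * (norm x)\<^sup>2 + 2 * (norm y)\<^sup>2"
    using sum_squares_bound[of "norm x" "norm y"] by (simp add: power2_sum)
  finally show ?thesis .
qed

lemma power2_norm_sum_le_card:
  fixes v :: "'i \<Rightarrow> 'a::real_normed_vector"
  shows "(norm (\<Sum>j\<in>J. v j))\<^sup>2 \<le> real (card J) * (\<Sum>j\<in>J. (norm (v j))\<^sup>2)"
proof -
  have "(norm (\<Sum>j\<in>J. v j))\<^sup>2 \<le> (\<Sum>j\<in>J. norm (v j))\<^sup>2"
    by (intro power_mono norm_sum) auto
  also have "\<dots> \<le> (\<Sum>j\<in>J. (norm (v j))\<^sup>2) * real (card J)"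
    by (rule sum_squared_le_sum_of_squares)
  finally show ?thesis by (simp add: mult.commute)
qed

lemma power2_norm_sum_scaleR_le:
  fixes v :: "'i \<Rightarrow> 'a::real_normed_vector"
  assumes "\<And>j. j \<in> J \<Longrightarrow> 0 \<le> a j"
  shows "(norm (\<Sum>j\<in>J. a j *\<^sub>R v j))\<^sup>2 \<le> (\<Sum>j\<in>J. a j) * (\<Sum>j\<in>J. a j * (norm (v j))\<^sup>2)"
proof -
  have "(norm (\<Sum>j\<in>J. a j *\<^sub>R v j))\<^sup>2 \<le> (\<Sum>j\<in>J. a j * norm (v j))\<^sup>2"
    using assms by (intro power_mono order.trans[OF norm_sum] sum_mono) auto
  also have "(\<Sum>j\<in>J. a j * norm (v j)) = (\<Sum>j\<in>J. sqrt (a j) * (sqrt (a j) * norm (v j)))"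
    using assms by (intro sum.cong) (auto simp: mult.assoc[symmetric])
  also have "(\<dots>)\<^sup>2 \<le> (\<Sum>j\<in>J. (sqrt (a j))\<^sup>2) * (\<Sum>j\<in>J. (sqrt (a j) * norm (v j))\<^sup>2)"
    by (rule Cauchy_Schwarz_ineq_sum)
  also have "\<dots> = (\<Sum>j\<in>J. a j) * (\<Sum>j\<in>J. a j * (norm (v j))\<^sup>2)"
    using assms by (intro arg_cong2[where f="(*)"] sum.cong) (auto simp: power_mult_distrib)
  finally show ?thesis .
qed

lemma power2_norm_mean_le:
  fixes v :: "nat \<Rightarrow> 'a::real_normed_vector"
  assumes "N \<ge> 1"
  shows "(norm ((1 / real N) *\<^sub>R (\<Sum>i<N. v i)))\<^sup>2 \<le> (1 / real N) * (\<Sum>i<N. (norm (v i))\<^sup>2)"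
proof -
  have "(norm ((1 / real N) *\<^sub>R (\<Sum>i<N. v i)))\<^sup>2 = (1 / real N)\<^sup>2 * (norm (\<Sum>i<N. v i))\<^sup>2"
    by (simp only: norm_scaleR power_mult_distrib) simp
  also have "\<dots> \<le> (1 / real N)\<^sup>2 * (real N * (\<Sum>i<N. (norm (v i))\<^sup>2))"
    using power2_norm_sum_le_card[of v "{..<N}"] by (intro mult_left_mono) auto
  also have "\<dots> = (1 / real N) * (\<Sum>i<N. (norm (v i))\<^sup>2)"
    using assms by (simp add: power2_eq_square)
  finally show ?thesis .
qed

lemma mean_power2_norm_eq:
  fixes a :: "nat \<Rightarrow> 'a::real_inner"
  assumes "N \<ge> 1"
  defines "ab \<equiv> (1 / real N) *\<^sub>R (\<Sum>i<N. a i)"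
  shows "(1 / real N) * (\<Sum>i<N. (norm (a i))\<^sup>2)
       = (norm ab)\<^sup>2 + (1 / real N) * (\<Sum>i<N. (norm (a i - ab))\<^sup>2)"
proof -
  have sa: "(\<Sum>i<N. a i) = real N *\<^sub>R ab" using assms by (simp add: ab_def)
  have "(\<Sum>i<N. (norm (a i - ab))\<^sup>2) = (\<Sum>i<N. (norm (a i))\<^sup>2 - 2 * (a i \<bullet> ab) + (norm ab)\<^sup>2)"
    by (intro sum.cong refl)
       (simp add: power2_norm_eq_inner inner_diff_left inner_diff_right inner_commute)
  also have "\<dots> = (\<Sum>i<N. (norm (a i))\<^sup>2) - 2 * ((\<Sum>i<N. a i) \<bullet> ab) + real N * (norm ab)\<^sup>2"
    by (simp add: sum.distrib sum_subtractf sum_distrib_left inner_sum_left)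
  also have "\<dots> = (\<Sum>i<N. (norm (a i))\<^sup>2) - real N * (norm ab)\<^sup>2"
    by (simp add: sa power2_norm_eq_inner)
  finally show ?thesis using assms by (simp add: field_simps)
qed

lemma sum_power2_le_power2_sum:
  fixes a :: "'i \<Rightarrow> real"
  assumes "finite I" "\<And>i. i \<in> I \<Longrightarrow> 0 \<le> a i"
  shows "(\<Sum>i\<in>I. (a i)\<^sup>2) \<le> (\<Sum>i\<in>I. a i)\<^sup>2"
proof -
  have "(\<Sum>i\<in>I. (a i)\<^sup>2) \<le> (\<Sum>i\<in>I. a i * (\<Sum>j\<in>I. a j))"
    unfolding power2_eq_square using assms by (intro sum_mono mult_left_mono member_le_sum) auto
  also have "\<dots> = (\<Sum>i\<in>I. a i)\<^sup>2" by (simp add: power2_eq_square sum_distrib_right)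
  finally show ?thesis .
qed

lemma descent_lemma:
  fixes f :: "'a::real_inner \<Rightarrow> real"
  assumes der: "\<And>x. (f has_derivative (\<lambda>h. gf x \<bullet> h)) (at x)"
    and lip: "\<And>x y. norm (gf x - gf y) \<le> L * norm (x - y)"
  shows "f y \<le> f x + gf x \<bullet> (y - x) + L / 2 * (norm (y - x))\<^sup>2"
proof -
  define h where "h = y - x"
  define \<psi> where "\<psi> t = f (x + t *\<^sub>R h) - t * (gf x \<bullet> h) - L / 2 * (norm h)\<^sup>2 * t\<^sup>2" for t
  have D: "DERIV \<psi> t :> gf (x + t *\<^sub>R h) \<bullet> h - gf x \<bullet> h - L * t * (norm h)\<^sup>2" for t
  proof -
    have "((\<lambda>t. f (x + t *\<^sub>R h)) has_derivative (\<lambda>s. gf (x + t *\<^sub>R h) \<bullet> (s *\<^sub>R h))) (at t)"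
      by (rule has_derivative_compose[OF _ der]) (auto intro!: derivative_eq_intros)
    moreover have "(\<lambda>s. gf (x + t *\<^sub>R h) \<bullet> (s *\<^sub>R h)) = (*) (gf (x + t *\<^sub>R h) \<bullet> h)"
      by (auto simp: mult.commute)
    ultimately have "DERIV (\<lambda>t. f (x + t *\<^sub>R h)) t :> gf (x + t *\<^sub>R h) \<bullet> h"
      by (simp add: has_field_derivative_def)
    then show ?thesis
      unfolding \<psi>_def by (auto intro!: derivative_eq_intros)
  qed
  have "\<psi> 1 \<le> \<psi> 0"
  proof (rule DERIV_nonpos_imp_nonincreasing[of 0 1 \<psi>])
    fix t :: real assume t: "0 \<le> t" "t \<le> 1"
    have "gf (x + t *\<^sub>R h) \<bullet> h - gf x \<bullet> h \<le> norm (gf (x + t *\<^sub>R h) - gf x) * norm h"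
      unfolding inner_diff_left[symmetric] by (rule norm_cauchy_schwarz)
    also have "\<dots> \<le> L * norm (t *\<^sub>R h) * norm h"
      using lip[of "x + t *\<^sub>R h" x] by (intro mult_right_mono) auto
    also have "\<dots> = L * t * (norm h)\<^sup>2"
      using t by (simp add: power2_eq_square)
    finally show "\<exists>y. DERIV \<psi> t :> y \<and> y \<le> 0"
      using D[of t] by auto
  qed simp
  then show ?thesis unfolding \<psi>_def h_def by simp
qed

lemma descent_step_scalar:
  fixes a b c v w n S \<eta> L :: real
  assumes S: "S > 0" and eta: "\<eta> > 0" and x: "L * \<eta> * S \<le> 1" and a: "0 \<le> a"
    and n: "n \<le> 2 * v + 2 * w" and b: "- b \<le> S / 4 * a + v / S" and L: "L > 0"
  shows "- \<eta> * (S * a + b + c) + L / 2 * (\<eta>\<^sup>2 * (S\<^sup>2 * a + 2 * S * b + 2 * S * c + n))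
     \<le> - (\<eta> * S / 2) * a + (\<eta> / S) * v + L * \<eta>\<^sup>2 * w - \<eta> * (1 - L * \<eta> * S) * c"
proof -
  define x where "x = L * \<eta> * S"
  have x01: "0 \<le> 1 - x" using x unfolding x_def by simp
  have Lx: "L * \<eta>\<^sup>2 = \<eta> * x / S" using S unfolding x_def by (simp add: power2_eq_square)
  have bb: "\<eta> * (1 - x) * (- b) \<le> \<eta> * (1 - x) * (S / 4 * a + v / S)"
    using b x01 eta by (intro mult_left_mono) auto
  have "- \<eta> * (S * a + b + c) + L / 2 * (\<eta>\<^sup>2 * (S\<^sup>2 * a + 2 * S * b + 2 * S * c + n))
     \<le> - \<eta> * (S * a + b + c) + L / 2 * (\<eta>\<^sup>2 * (S\<^sup>2 * a + 2 * S * b + 2 * S * c + (2 * v + 2 * w)))"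
    using n L by (intro add_left_mono mult_left_mono) auto
  also have "\<dots> = - (\<eta> * S) * (1 - x / 2) * a + \<eta> * (1 - x) * (- b) - \<eta> * (1 - x) * c
      + L * \<eta>\<^sup>2 * v + L * \<eta>\<^sup>2 * w"
    unfolding x_def using S by (simp add: power2_eq_square field_simps)
  also have "\<dots> \<le> - (\<eta> * S) * (1 - x / 2) * a + \<eta> * (1 - x) * (S / 4 * a + v / S) - \<eta> * (1 - x) * c
      + L * \<eta>\<^sup>2 * v + L * \<eta>\<^sup>2 * w"
    using bb by linarith
  also have "\<dots> = - (\<eta> * S) * (3 / 4 - x / 4) * a + (\<eta> / S) * v - \<eta> * (1 - x) * c + L * \<eta>\<^sup>2 * w"
    unfolding Lx using S by (simp add: field_simps)
  also have "\<dots> \<le> - (\<eta> * S / 2) * a + (\<eta> / S) * v - \<eta> * (1 - x) * c + L * \<eta>\<^sup>2 * w"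
  proof -
    have "(\<eta> * S / 2) * a \<le> (\<eta> * S) * (3 / 4 - x / 4) * a"
      using x01 a S eta by (intro mult_right_mono) (auto simp: field_simps)
    then have "- (\<eta> * S) * (3 / 4 - x / 4) * a \<le> - (\<eta> * S / 2) * a"
      by (simp only: mult_minus_left neg_le_iff_le)
    then show ?thesis by linarith
  qed
  finally show ?thesis unfolding x_def by simp
qed

lemma descent_step:
  fixes U V W :: "'a::real_inner"
  assumes "S > 0" "\<eta> > 0" "L > 0" "L * \<eta> * S \<le> 1"
  shows "- \<eta> * (S * (norm U)\<^sup>2 + U \<bullet> V + U \<bullet> W) + L / 2 * (\<eta>\<^sup>2 * (norm (S *\<^sub>R U + V + W))\<^sup>2)
     \<le> - (\<eta> * S / 2) * (norm U)\<^sup>2 + (\<eta> / S) * (norm V)\<^sup>2 + L * \<eta>\<^sup>2 * (norm W)\<^sup>2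
        - \<eta> * (1 - L * \<eta> * S) * (U \<bullet> W)"
proof -
  have "(norm (S *\<^sub>R U + V + W))\<^sup>2 = S\<^sup>2 * (norm U)\<^sup>2 + 2 * S * (U \<bullet> V) + 2 * S * (U \<bullet> W)
      + (norm (V + W))\<^sup>2"
    unfolding power2_norm_eq_inner
    by (simp add: inner_add_left inner_add_right inner_commute power2_eq_square algebra_simps)
  moreover have "- (U \<bullet> V) \<le> S / 4 * (norm U)\<^sup>2 + (norm V)\<^sup>2 / S"
  proof -
    have "0 \<le> (S / 2 * norm U - norm V)\<^sup>2 / S" using assms by simp
    also have "\<dots> = S / 4 * (norm U)\<^sup>2 - norm U * norm V + (norm V)\<^sup>2 / S"
      using assms by (simp add: power2_eq_square field_simps)
    finally show ?thesis using Cauchy_Schwarz_ineq2[of U V] by (simp add: abs_le_iff)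
  qed
  ultimately show ?thesis
    using descent_step_scalar[OF assms(1,2,4) _ power2_norm_add_le[of V W]] assms(3) by simp
qed

section \<open>Projections onto random subspaces\<close>

lemma matrix_vector_mult_sum: "(A::real^'n^'m) *v (\<Sum>k\<in>K. x k) = (\<Sum>k\<in>K. A *v x k)"
  by (induction K rule: infinite_finite_induct) (auto simp: matrix_vector_right_distrib)

lemma transpose_proj_of: "transpose (proj_of P) = proj_of P"
  unfolding proj_of_def by (simp add: matrix_transpose_mul)

lemma proj_of_idem:
  assumes "P \<in> stiefel"
  shows "proj_of P ** proj_of P = proj_of P"
proof -
  have "proj_of P ** proj_of P = P ** (transpose P ** P) ** transpose P"
    unfolding proj_of_def by (simp add: matrix_mul_assoc)
  then show ?thesis using assms unfolding stiefel_def proj_of_def by simp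
qed

lemma inner_matrix_vector_symmetric:
  fixes A :: "real^'n^'n"
  assumes "transpose A = A"
  shows "(A *v x) \<bullet> y = x \<bullet> (A *v y)"
proof -
  have "(A *v x) \<bullet> y = (x v* transpose A) \<bullet> y" by simp
  also have "\<dots> = x \<bullet> (transpose A *v y)" by (rule dot_lmul_matrix)
  finally show ?thesis using assms by simp
qed

lemma inner_proj_of_proj_of:
  assumes "P \<in> stiefel"
  shows "(proj_of P *v x) \<bullet> (proj_of P *v y) = x \<bullet> (proj_of P *v y)"
  using inner_matrix_vector_symmetric[OF transpose_proj_of, of P x "proj_of P *v y"]
  by (simp add: matrix_vector_mul_assoc proj_of_idem[OF assms])

lemma power2_norm_proj_of:
  assumes "P \<in> stiefel"
  shows "(norm (proj_of P *v x))\<^sup>2 = x \<bullet> (proj_of P *v x)"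
  using inner_proj_of_proj_of[OF assms, of x x] by (simp add: power2_norm_eq_inner)

lemma norm_proj_of_le:
  assumes "P \<in> stiefel"
  shows "norm (proj_of P *v x) \<le> norm x"
proof -
  have "(norm (proj_of P *v x))\<^sup>2 \<le> norm x * norm (proj_of P *v x)"
    unfolding power2_norm_proj_of[OF assms] by (rule norm_cauchy_schwarz)
  then show ?thesis
    by (cases "norm (proj_of P *v x) = 0") (auto simp: power2_eq_square)
qed

lemma proj_of_nth: "proj_of (P::real^'r^'d) $ a $ b = (\<Sum>c\<in>UNIV. P $ a $ c * P $ b $ c)"
  by (simp add: proj_of_def matrix_matrix_mult_def transpose_def)

lemma stiefel_column_norm: "P \<in> stiefel \<Longrightarrow> (\<Sum>a\<in>UNIV. (P $ a $ c)\<^sup>2) = 1"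
proof -
  assume "P \<in> stiefel"
  then have "(transpose P ** P) $ c $ c = 1" unfolding stiefel_def by (simp add: mat_def)
  then show ?thesis by (simp add: matrix_matrix_mult_def transpose_def power2_eq_square)
qed

lemma stiefel_abs_nth_le: "P \<in> stiefel \<Longrightarrow> \<bar>P $ a $ c\<bar> \<le> 1"
proof -
  assume "P \<in> stiefel"
  have "(P $ a $ c)\<^sup>2 \<le> (\<Sum>a\<in>UNIV. (P $ a $ c)\<^sup>2)"
    by (rule member_le_sum) auto
  then have "(P $ a $ c)\<^sup>2 \<le> 1\<^sup>2" using stiefel_column_norm[OF \<open>P \<in> stiefel\<close>] by simp
  then show ?thesis using abs_le_square_iff[of "P $ a $ c" 1] by simp
qed

lemma trace_proj_of:
  "P \<in> stiefel \<Longrightarrow> (\<Sum>a\<in>UNIV. proj_of (P::real^'r^'d) $ a $ a) = real CARD('r)"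
proof -
  assume P: "P \<in> stiefel"
  have "(\<Sum>a\<in>UNIV. proj_of P $ a $ a) = (\<Sum>a\<in>UNIV. \<Sum>c\<in>UNIV. (P $ a $ c)\<^sup>2)"
    by (simp add: proj_of_nth power2_eq_square)
  also have "\<dots> = (\<Sum>c\<in>(UNIV::'r set). \<Sum>a\<in>UNIV. (P $ a $ c)\<^sup>2)" by (rule sum.swap)
  finally show ?thesis using stiefel_column_norm[OF P] by simp
qed

lemma abs_proj_of_nth_le:
  "P \<in> stiefel \<Longrightarrow> \<bar>proj_of (P::real^'r^'d) $ a $ b\<bar> \<le> real CARD('r)"
proof -
  assume P: "P \<in> stiefel"
  have "\<bar>proj_of P $ a $ b\<bar> \<le> (\<Sum>c\<in>(UNIV::'r set). \<bar>P $ a $ c * P $ b $ c\<bar>)"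
    unfolding proj_of_nth by (rule sum_abs)
  also have "\<dots> \<le> (\<Sum>c\<in>(UNIV::'r set). 1)"
    using stiefel_abs_nth_le[OF P] by (intro sum_mono) (auto simp: abs_mult intro: mult_le_one)
  finally show ?thesis by simp
qed

definition sign_flip :: "'d \<Rightarrow> real^'d^'d" where
  "sign_flip a = (\<chi> i j. if i = j then (if i = a then -1 else 1) else 0)"

definition swap_index :: "'d \<Rightarrow> 'd \<Rightarrow> 'd \<Rightarrow> 'd" where
  "swap_index a b i = (if i = a then b else if i = b then a else i)"

definition swap_rows :: "'d \<Rightarrow> 'd \<Rightarrow> real^'d^'d" where
  "swap_rows a b = (\<chi> i j. if j = swap_index a b i then 1 else 0)"

lemma swap_index_swap_index [simp]: "swap_index a b (swap_index a b i) = i"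
  unfolding swap_index_def by auto

lemma swap_index_eq_iff: "swap_index a b k = i \<longleftrightarrow> k = swap_index a b i"
  by (metis swap_index_swap_index)

lemma orthogonal_matrix_sign_flip: "orthogonal_matrix (sign_flip a)"
  unfolding orthogonal_matrix
proof (rule vec_eq_iff[THEN iffD2], intro allI, rule vec_eq_iff[THEN iffD2], intro allI)
  fix i j
  have "(transpose (sign_flip a) ** sign_flip a) $ i $ j
      = (\<Sum>k\<in>UNIV. sign_flip a $ k $ i * sign_flip a $ k $ j)"
    by (simp add: matrix_matrix_mult_def transpose_def)
  also have "\<dots> = (\<Sum>k\<in>UNIV. if k = i then (if i = j then 1 else 0) else 0)"
    by (intro sum.cong refl) (auto simp: sign_flip_def)
  finally show "(transpose (sign_flip a) ** sign_flip a) $ i $ j = mat 1 $ i $ j"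
    by (simp add: mat_def)
qed

lemma orthogonal_matrix_swap_rows: "orthogonal_matrix (swap_rows a b)"
  unfolding orthogonal_matrix
proof (rule vec_eq_iff[THEN iffD2], intro allI, rule vec_eq_iff[THEN iffD2], intro allI)
  fix i j
  have "(transpose (swap_rows a b) ** swap_rows a b) $ i $ j
      = (\<Sum>k\<in>UNIV. swap_rows a b $ k $ i * swap_rows a b $ k $ j)"
    by (simp add: matrix_matrix_mult_def transpose_def)
  also have "\<dots> = (\<Sum>k\<in>UNIV. if k = swap_index a b i then (if i = j then 1 else 0) else 0)"
    by (intro sum.cong refl) (auto simp: swap_rows_def swap_index_eq_iff[symmetric])
  finally show "(transpose (swap_rows a b) ** swap_rows a b) $ i $ j = mat 1 $ i $ j"
    by (simp add: mat_def)
qed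

lemma sign_flip_mult_nth:
  "(sign_flip a ** (P::real^'r^'d)) $ i $ c = (if i = a then -1 else 1) * P $ i $ c"
proof -
  have "(sign_flip a ** P) $ i $ c = (\<Sum>k\<in>UNIV. sign_flip a $ i $ k * P $ k $ c)"
    by (simp add: matrix_matrix_mult_def)
  also have "\<dots> = (\<Sum>k\<in>UNIV. if k = i then (if i = a then -1 else 1) * P $ i $ c else 0)"
    by (intro sum.cong refl) (auto simp: sign_flip_def)
  finally show ?thesis by simp
qed

lemma swap_rows_mult_nth: "(swap_rows a b ** (P::real^'r^'d)) $ i $ c = P $ (swap_index a b i) $ c"
proof -
  have "(swap_rows a b ** P) $ i $ c = (\<Sum>k\<in>UNIV. swap_rows a b $ i $ k * P $ k $ c)"
    by (simp add: matrix_matrix_mult_def)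
  also have "\<dots> = (\<Sum>k\<in>UNIV. if k = swap_index a b i then P $ (swap_index a b i) $ c else 0)"
    by (intro sum.cong refl) (auto simp: swap_rows_def)
  finally show ?thesis by simp
qed

lemma borel_measurable_vec_iff:
  fixes X :: "'w \<Rightarrow> 'a::euclidean_space ^'n"
  shows "X \<in> borel_measurable M \<longleftrightarrow> (\<forall>i. (\<lambda>\<omega>. X \<omega> $ i) \<in> borel_measurable M)"
proof
  assume X: "X \<in> borel_measurable M"
  have "(\<lambda>x::'a^'n. x $ i) \<in> borel_measurable borel" for i
    by (intro borel_measurable_continuous_onI linear_continuous_on bounded_linear_vec_nth)
  then show "\<forall>i. (\<lambda>\<omega>. X \<omega> $ i) \<in> borel_measurable M"
    using measurable_compose[OF X] by blast
next
  assume c: "\<forall>i. (\<lambda>\<omega>. X \<omega> $ i) \<in> borel_measurable M"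
  show "X \<in> borel_measurable M"
    unfolding borel_measurable_euclidean_space[where f=X]
  proof
    fix b :: "'a^'n" assume "b \<in> Basis"
    then obtain i u where b: "b = axis i u" "u \<in> Basis" unfolding Basis_vec_def by auto
    have "(\<lambda>\<omega>. X \<omega> $ i \<bullet> u) \<in> borel_measurable M"
      using c by (intro borel_measurable_inner) auto
    then show "(\<lambda>x. X x \<bullet> b) \<in> borel_measurable M"
      by (simp add: b inner_axis)
  qed
qed

lemma borel_measurable_vec_nth [measurable (raw)]:
  fixes X :: "'w \<Rightarrow> 'a::euclidean_space ^'n"
  shows "X \<in> borel_measurable M \<Longrightarrow> (\<lambda>\<omega>. X \<omega> $ i) \<in> borel_measurable M"
  using borel_measurable_vec_iff by blast

lemma borel_measurable_matrix_vector_mult [measurable (raw)]: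
  fixes A :: "'w \<Rightarrow> real^'n^'m" and X :: "'w \<Rightarrow> real^'n"
  assumes [measurable]: "A \<in> borel_measurable M" "X \<in> borel_measurable M"
  shows "(\<lambda>\<omega>. A \<omega> *v X \<omega>) \<in> borel_measurable M"
  by (intro borel_measurable_vec_iff[THEN iffD2] allI) (simp add: matrix_vector_mult_def)

lemma borel_measurable_matrix_mult [measurable (raw)]:
  fixes A :: "'w \<Rightarrow> real^'n^'m" and B :: "'w \<Rightarrow> real^'k^'n"
  assumes [measurable]: "A \<in> borel_measurable M" "B \<in> borel_measurable M"
  shows "(\<lambda>\<omega>. A \<omega> ** B \<omega>) \<in> borel_measurable M"
  by (intro borel_measurable_vec_iff[THEN iffD2] allI) (simp add: matrix_matrix_mult_def)

lemma borel_measurable_transpose [measurable (raw)]: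
  fixes A :: "'w \<Rightarrow> real^'n^'m"
  assumes [measurable]: "A \<in> borel_measurable M"
  shows "(\<lambda>\<omega>. transpose (A \<omega>)) \<in> borel_measurable M"
  by (intro borel_measurable_vec_iff[THEN iffD2] allI) (simp add: transpose_def)

lemma borel_measurable_proj_of [measurable (raw)]:
  fixes A :: "'w \<Rightarrow> real^'r^'d"
  assumes "A \<in> borel_measurable M"
  shows "(\<lambda>\<omega>. proj_of (A \<omega>)) \<in> borel_measurable M"
  unfolding proj_of_def using assms by measurable

lemma stiefel_in_borel: "(stiefel :: (real^'r^'d) set) \<in> sets borel"
proof -
  have "(\<lambda>P::real^'r^'d. transpose P ** P) -` {mat 1} \<inter> space borel \<in> sets borel"
    by measurable
  moreover have "(\<lambda>P::real^'r^'d. transpose P ** P) -` {mat 1} \<inter> space borel = stiefel"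
    unfolding stiefel_def by auto
  ultimately show ?thesis by simp
qed

lemma borel_measurable_lipschitz:
  fixes G :: "'a::metric_space \<Rightarrow> 'b::metric_space"
  assumes "0 \<le> L" "\<And>x y. dist (G x) (G y) \<le> L * dist x y"
  shows "G \<in> borel_measurable borel"
  using assms by (intro borel_measurable_continuous_onI lipschitz_on_continuous_on[of L])
    (auto simp: lipschitz_on_def)

lemma borel_measurable_fst_local_iter:
  fixes Pr :: "'w \<Rightarrow> real^'d^'d"
  assumes [measurable]: "Pr \<in> borel_measurable M" "th \<in> borel_measurable M"
    and "\<And>k. k < s \<Longrightarrow> gs k \<in> borel_measurable M"
  shows "(\<lambda>\<omega>. fst (local_iter m e (Pr \<omega>) (\<lambda>k. gs k \<omega>) (th \<omega>) s)) \<in> borel_measurable M"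
proof -
  have "(\<lambda>\<omega>. \<Sum>k<s. momentum_weight m s k *\<^sub>R (Pr \<omega> *v gs k \<omega>)) \<in> borel_measurable M"
  proof (rule borel_measurable_sum)
    fix k assume "k \<in> {..<s}"
    then have [measurable]: "gs k \<in> borel_measurable M" using assms by auto
    show "(\<lambda>\<omega>. momentum_weight m s k *\<^sub>R (Pr \<omega> *v gs k \<omega>)) \<in> borel_measurable M"
      by measurable
  qed
  then show ?thesis unfolding fst_local_iter by measurable
qed

lemma measurable_sigma_of_generators:
  assumes "G \<subseteq> Pow \<Omega>" "\<And>A. A \<in> sets borel \<Longrightarrow> X -` A \<inter> \<Omega> \<in> G"
  shows "X \<in> borel_measurable (sigma \<Omega> G)"
proof (rule measurableI)
  fix A :: "'b set" assume "A \<in> sets borel"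
  then have "X -` A \<inter> \<Omega> \<in> G" using assms by auto
  then show "X -` A \<inter> space (sigma \<Omega> G) \<in> sets (sigma \<Omega> G)"
    using assms(1) by (simp add: space_measure_of_conv sets_measure_of_conv sigma_sets.Basic)
qed simp

lemma measurable_mono_sets:
  assumes "space F1 = space F2" "sets F1 \<subseteq> sets F2" "X \<in> measurable F1 N"
  shows "X \<in> measurable F2 N"
  using assms unfolding measurable_def by auto

definition sq_integrable :: "'a measure \<Rightarrow> ('a \<Rightarrow> 'b::euclidean_space) \<Rightarrow> bool" where
  "sq_integrable M X \<longleftrightarrow> X \<in> borel_measurable M \<and> integrable M (\<lambda>\<omega>. (norm (X \<omega>))\<^sup>2)"

lemma sq_integrableD:
  "sq_integrable M X \<Longrightarrow> X \<in> borel_measurable M"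
  "sq_integrable M X \<Longrightarrow> integrable M (\<lambda>\<omega>. (norm (X \<omega>))\<^sup>2)"
  unfolding sq_integrable_def by auto

context finite_measure
begin

lemma sq_integrable_bound:
  fixes X :: "'a \<Rightarrow> 'b::euclidean_space" and Y :: "'a \<Rightarrow> 'c::euclidean_space"
  assumes X: "sq_integrable M X" and [measurable]: "Y \<in> borel_measurable M"
    and bound: "AE \<omega> in M. norm (Y \<omega>) \<le> a * norm (X \<omega>) + b" and "0 \<le> a" "0 \<le> b"
  shows "sq_integrable M Y"
  unfolding sq_integrable_def
proof
  have "integrable M (\<lambda>\<omega>. 2 * a\<^sup>2 * (norm (X \<omega>))\<^sup>2 + 2 * b\<^sup>2)"
    using sq_integrableD(2)[OF X] by auto
  then show "integrable M (\<lambda>\<omega>. (norm (Y \<omega>))\<^sup>2)"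
  proof (rule Bochner_Integration.integrable_bound)
    show "AE \<omega> in M. norm ((norm (Y \<omega>))\<^sup>2) \<le> norm (2 * a\<^sup>2 * (norm (X \<omega>))\<^sup>2 + 2 * b\<^sup>2)"
      using bound
    proof eventually_elim
      case (elim \<omega>)
      have "(norm (Y \<omega>))\<^sup>2 \<le> (norm (a * norm (X \<omega>) + b))\<^sup>2"
        using elim assms(4,5) by (intro power_mono) auto
      also have "\<dots> \<le> 2 * (norm (a * norm (X \<omega>)))\<^sup>2 + 2 * (norm b)\<^sup>2"
        by (rule power2_norm_add_le)
      finally show ?case by (simp add: power_mult_distrib)
    qed
  qed measurable
qed measurable

lemma sq_integrable_add:
  fixes X Y :: "'a \<Rightarrow> 'b::euclidean_space"
  assumes X: "sq_integrable M X" and Y: "sq_integrable M Y"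
  shows "sq_integrable M (\<lambda>\<omega>. X \<omega> + Y \<omega>)"
proof -
  have [measurable]: "X \<in> borel_measurable M" "Y \<in> borel_measurable M"
    using X Y by (auto dest: sq_integrableD(1))
  have "integrable M (\<lambda>\<omega>. 2 * (norm (X \<omega>))\<^sup>2 + 2 * (norm (Y \<omega>))\<^sup>2)"
    using X Y unfolding sq_integrable_def by auto
  then have "integrable M (\<lambda>\<omega>. (norm (X \<omega> + Y \<omega>))\<^sup>2)"
    by (rule Bochner_Integration.integrable_bound) (auto intro!: AE_I2 power2_norm_add_le)
  then show ?thesis unfolding sq_integrable_def by simp
qed

lemma sq_integrable_scaleR:
  fixes X :: "'a \<Rightarrow> 'b::euclidean_space"
  assumes "sq_integrable M X"
  shows "sq_integrable M (\<lambda>\<omega>. c *\<^sub>R X \<omega>)"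
  by (rule sq_integrable_bound[OF assms, of _ "\<bar>c\<bar>" 0]) (use assms in \<open>auto simp: sq_integrable_def\<close>)

lemma sq_integrable_diff:
  fixes X Y :: "'a \<Rightarrow> 'b::euclidean_space"
  assumes "sq_integrable M X" "sq_integrable M Y"
  shows "sq_integrable M (\<lambda>\<omega>. X \<omega> - Y \<omega>)"
  using sq_integrable_add[OF assms(1) sq_integrable_scaleR[OF assms(2), of "-1"]] by simp

lemma sq_integrable_const: "sq_integrable M (\<lambda>\<omega>. c)"
  unfolding sq_integrable_def by auto

lemma sq_integrable_sum:
  fixes X :: "'i \<Rightarrow> 'a \<Rightarrow> 'b::euclidean_space"
  assumes "\<And>k. k \<in> K \<Longrightarrow> sq_integrable M (X k)"
  shows "sq_integrable M (\<lambda>\<omega>. \<Sum>k\<in>K. X k \<omega>)"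
  using assms
  by (induction K rule: infinite_finite_induct) (auto simp: sq_integrable_const sq_integrable_add)

lemma integrable_inner:
  fixes X Y :: "'a \<Rightarrow> 'b::euclidean_space"
  assumes X: "sq_integrable M X" and Y: "sq_integrable M Y"
  shows "integrable M (\<lambda>\<omega>. X \<omega> \<bullet> Y \<omega>)"
proof -
  have [measurable]: "X \<in> borel_measurable M" "Y \<in> borel_measurable M"
    using X Y unfolding sq_integrable_def by auto
  have "integrable M (\<lambda>\<omega>. (norm (X \<omega>))\<^sup>2 + (norm (Y \<omega>))\<^sup>2)"
    using X Y unfolding sq_integrable_def by auto
  then show ?thesis
  proof (rule Bochner_Integration.integrable_bound)
    show "AE \<omega> in M. norm (X \<omega> \<bullet> Y \<omega>) \<le> norm ((norm (X \<omega>))\<^sup>2 + (norm (Y \<omega>))\<^sup>2)"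
    proof (intro AE_I2)
      fix \<omega>
      have "norm (X \<omega> \<bullet> Y \<omega>) \<le> norm (X \<omega>) * norm (Y \<omega>)"
        using Cauchy_Schwarz_ineq2 by simp
      also have "\<dots> \<le> (norm (X \<omega>))\<^sup>2 + (norm (Y \<omega>))\<^sup>2"
        using sum_squares_bound[of "norm (X \<omega>)" "norm (Y \<omega>)"]
          mult_nonneg_nonneg[OF norm_ge_zero norm_ge_zero, of "X \<omega>" "Y \<omega>"] by linarith
      finally show "norm (X \<omega> \<bullet> Y \<omega>) \<le> norm ((norm (X \<omega>))\<^sup>2 + (norm (Y \<omega>))\<^sup>2)" by simp
    qed
  qed measurable
qed

lemma integrable_mult:
  fixes h k :: "'a \<Rightarrow> real"
  shows "sq_integrable M h \<Longrightarrow> sq_integrable M k \<Longrightarrow> integrable M (\<lambda>\<omega>. h \<omega> * k \<omega>)"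
  using integrable_inner[of h k] by simp

lemma sq_integrable_imp_integrable:
  fixes h :: "'a \<Rightarrow> real"
  assumes "sq_integrable M h"
  shows "integrable M h"
proof (rule square_integrable_imp_integrable)
  show "h \<in> borel_measurable M" using assms by (rule sq_integrableD)
  show "integrable M (\<lambda>\<omega>. (h \<omega>)\<^sup>2)" using sq_integrableD(2)[OF assms] by simp
qed

lemma sq_integrable_vec_nth:
  fixes X :: "'a \<Rightarrow> real^'n"
  assumes X: "sq_integrable M X"
  shows "sq_integrable M (\<lambda>\<omega>. X \<omega> $ j)"
proof (rule sq_integrable_bound[OF X, of _ 1 0])
  show "(\<lambda>\<omega>. X \<omega> $ j) \<in> borel_measurable M"
    using sq_integrableD(1)[OF X] by measurable
  show "AE \<omega> in M. norm (X \<omega> $ j) \<le> 1 * norm (X \<omega>) + 0"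
    by (intro AE_I2) (simp add: component_le_norm_cart)
qed auto

lemma sq_integrable_lipschitz:
  fixes X :: "'a \<Rightarrow> 'b::euclidean_space" and G :: "'b \<Rightarrow> 'c::euclidean_space"
  assumes X: "sq_integrable M X" and G: "G \<in> borel_measurable borel"
    and lip: "\<And>x y. norm (G x - G y) \<le> L * norm (x - y)" and "0 \<le> L"
  shows "sq_integrable M (\<lambda>\<omega>. G (X \<omega>))"
proof (rule sq_integrable_bound[OF X, of _ L "norm (G 0)"])
  show "(\<lambda>\<omega>. G (X \<omega>)) \<in> borel_measurable M"
    using measurable_compose[OF sq_integrableD(1)[OF X] G] .
  show "AE \<omega> in M. norm (G (X \<omega>)) \<le> L * norm (X \<omega>) + norm (G 0)"
  proof (intro AE_I2)
    fix \<omega>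
    have "norm (G (X \<omega>)) \<le> norm (G (X \<omega>) - G 0) + norm (G 0)"
      using norm_triangle_sub[of "G (X \<omega>)" "G 0"] by linarith
    also have "\<dots> \<le> L * norm (X \<omega>) + norm (G 0)"
      using lip[of "X \<omega>" 0] by simp
    finally show "norm (G (X \<omega>)) \<le> L * norm (X \<omega>) + norm (G 0)" .
  qed
qed (use assms in auto)

lemma integral_power2_norm_sum_orthogonal:
  fixes X :: "'i \<Rightarrow> 'a \<Rightarrow> 'b::euclidean_space"
  assumes "finite I" and sq: "\<And>m. m \<in> I \<Longrightarrow> sq_integrable M (X m)"
    and orth: "\<And>m m'. m \<in> I \<Longrightarrow> m' \<in> I \<Longrightarrow> m \<noteq> m' \<Longrightarrow> (\<integral>\<omega>. X m \<omega> \<bullet> X m' \<omega> \<partial>M) = 0"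
  shows "(\<integral>\<omega>. (norm (\<Sum>m\<in>I. c m *\<^sub>R X m \<omega>))\<^sup>2 \<partial>M) = (\<Sum>m\<in>I. (c m)\<^sup>2 * (\<integral>\<omega>. (norm (X m \<omega>))\<^sup>2 \<partial>M))"
proof -
  have int: "integrable M (\<lambda>\<omega>. c m * c m' * (X m \<omega> \<bullet> X m' \<omega>))" if "m \<in> I" "m' \<in> I" for m m'
    using integrable_inner[OF sq[OF that(1)] sq[OF that(2)]] by auto
  have "(norm (\<Sum>m\<in>I. c m *\<^sub>R X m \<omega>))\<^sup>2 = (\<Sum>m\<in>I. \<Sum>m'\<in>I. c m * c m' * (X m \<omega> \<bullet> X m' \<omega>))" for \<omega>
  proof -
    have "(norm (\<Sum>m\<in>I. c m *\<^sub>R X m \<omega>))\<^sup>2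
        = (\<Sum>m\<in>I. \<Sum>m'\<in>I. (c m *\<^sub>R X m \<omega>) \<bullet> (c m' *\<^sub>R X m' \<omega>))"
      unfolding power2_norm_eq_inner by (simp only: inner_sum_left inner_sum_right) (rule sum.swap)
    then show ?thesis by (simp add: ac_simps)
  qed
  then have "(\<integral>\<omega>. (norm (\<Sum>m\<in>I. c m *\<^sub>R X m \<omega>))\<^sup>2 \<partial>M)
      = (\<Sum>m\<in>I. \<Sum>m'\<in>I. (\<integral>\<omega>. c m * c m' * (X m \<omega> \<bullet> X m' \<omega>) \<partial>M))"
    using int by (simp add: Bochner_Integration.integral_sum integrable_sum)
  also have "\<dots> = (\<Sum>m\<in>I. \<Sum>m'\<in>I. if m' = m then (c m)\<^sup>2 * (\<integral>\<omega>. (norm (X m \<omega>))\<^sup>2 \<partial>M) else 0)"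
    using orth by (intro sum.cong refl) (auto simp: power2_eq_square power2_norm_eq_inner[symmetric])
  finally show ?thesis using \<open>finite I\<close> by simp
qed

end

section \<open>Orthogonality from conditional expectations\<close>

lemma prod_eq_mult_if_others_one:
  fixes h :: "'i \<Rightarrow> 'a::comm_monoid_mult"
  assumes "finite I" "i \<in> I" "j \<in> I" "i \<noteq> j" "\<And>l. l \<in> I - {i, j} \<Longrightarrow> h l = 1"
  shows "(\<Prod>l\<in>I. h l) = h i * h j"
  using prod.mono_neutral_right[of I "{i, j}" h] assms by auto

lemma (in finite_measure) integrable_indicator_comp:
  "X \<in> measurable M N \<Longrightarrow> C \<in> sets N \<Longrightarrow> integrable M (\<lambda>\<omega>. indicator C (X \<omega>) :: real)"
  by (rule integrable_const_bound[of _ 1]) auto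

lemma (in finite_measure) integrable_indicator_comp_mult:
  fixes f :: "'a \<Rightarrow> real"
  assumes f: "integrable M f" and [measurable]: "X \<in> measurable M N" "C \<in> sets N"
  shows "integrable M (\<lambda>\<omega>. indicator C (X \<omega>) * f \<omega>)"
  using f
proof (rule Bochner_Integration.integrable_bound)
  show "(\<lambda>\<omega>. indicator C (X \<omega>) * f \<omega>) \<in> borel_measurable M"
    using borel_measurable_integrable[OF f] by measurable
qed (auto simp: indicator_def)

text \<open>The conditional expectation of W given Y vanishes.\<close>

lemma (in finite_measure) integral_fun_mult_eq_0:
  fixes Y :: "'a \<Rightarrow> 'b::topological_space" and \<phi> :: "'b \<Rightarrow> real"
  assumes [measurable]: "Y \<in> borel_measurable M" and W: "integrable M W"
    and orth: "\<And>C. C \<in> sets borel \<Longrightarrow> (\<integral>\<omega>. indicator C (Y \<omega>) * W \<omega> \<partial>M) = 0"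
    and [measurable]: "\<phi> \<in> borel_measurable borel"
    and \<phi>W: "integrable M (\<lambda>\<omega>. \<phi> (Y \<omega>) * W \<omega>)"
  shows "(\<integral>\<omega>. \<phi> (Y \<omega>) * W \<omega> \<partial>M) = 0"
proof -
  let ?G = "vimage_algebra (space M) Y borel"
  have [measurable]: "W \<in> borel_measurable M" using W by auto
  have sets_G: "sets ?G = {Y -` C \<inter> space M | C. C \<in> sets borel}"
    by (rule sets_vimage_algebra2) simp
  interpret G: finite_measure_subalgebra M ?G
    by unfold_locales (auto simp: subalgebra_def sets_G)
  have zero: "AE \<omega> in M. real_cond_exp M ?G W \<omega> = 0"
  proof (rule G.real_cond_exp_charact)
    fix A assume "A \<in> sets ?G"
    then obtain C where C: "C \<in> sets borel" "A = Y -` C \<inter> space M" by (auto simp: sets_G)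
    have "(\<integral>\<omega>\<in>A. W \<omega> \<partial>M) = (\<integral>\<omega>. indicator C (Y \<omega>) * W \<omega> \<partial>M)"
      unfolding set_lebesgue_integral_def C(2)
      by (intro Bochner_Integration.integral_cong) (auto simp: indicator_def)
    then show "(\<integral>\<omega>\<in>A. W \<omega> \<partial>M) = (\<integral>\<omega>\<in>A. 0 \<partial>M)" using orth[OF C(1)] by simp
  qed (use W in auto)
  have "(\<lambda>\<omega>. \<phi> (Y \<omega>)) \<in> borel_measurable ?G"
    by (rule measurable_compose[OF measurable_vimage_algebra1]) auto
  then have "(\<integral>\<omega>. \<phi> (Y \<omega>) * W \<omega> \<partial>M) = (\<integral>\<omega>. \<phi> (Y \<omega>) * real_cond_exp M ?G W \<omega> \<partial>M)"
    by (intro G.real_cond_exp_intg(2)[symmetric] \<phi>W) auto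
  also have "\<dots> = (\<integral>\<omega>. 0 \<partial>M)"
    using zero by (intro integral_cong_AE) auto
  finally show ?thesis by simp
qed

context sigma_finite_subalgebra
begin

lemma integral_mult_diff_cond_exp_eq_0:
  assumes [measurable]: "h \<in> borel_measurable F" "g \<in> borel_measurable M" "m \<in> borel_measurable M"
    and hg: "integrable M (\<lambda>\<omega>. h \<omega> * g \<omega>)" and hm: "integrable M (\<lambda>\<omega>. h \<omega> * m \<omega>)"
    and cond: "AE \<omega> in M. real_cond_exp M F g \<omega> = m \<omega>"
  shows "(\<integral>\<omega>. h \<omega> * (g \<omega> - m \<omega>) \<partial>M) = 0"
proof -
  have [measurable]: "h \<in> borel_measurable M" by (rule measurable_from_subalg[OF subalg]) simp
  have "(\<integral>\<omega>. h \<omega> * g \<omega> \<partial>M) = (\<integral>\<omega>. h \<omega> * real_cond_exp M F g \<omega> \<partial>M)"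
    by (rule real_cond_exp_intg(2)[symmetric]) (use hg in auto)
  also have "\<dots> = (\<integral>\<omega>. h \<omega> * m \<omega> \<partial>M)"
    using cond by (intro integral_cong_AE) auto
  finally show ?thesis using hg hm by (simp add: right_diff_distrib)
qed

end

context finite_measure_subalgebra
begin

lemma integral_inner_diff_cond_exp_eq_0:
  fixes H X m :: "'a \<Rightarrow> real^'n"
  assumes HF: "H \<in> borel_measurable F" and H: "sq_integrable M H"
    and X: "sq_integrable M X" and m: "sq_integrable M m"
    and cond: "AE \<omega> in M. \<forall>j. real_cond_exp M F (\<lambda>\<omega>. X \<omega> $ j) \<omega> = m \<omega> $ j"
  shows "(\<integral>\<omega>. H \<omega> \<bullet> (X \<omega> - m \<omega>) \<partial>M) = 0"
proof -
  have int: "integrable M (\<lambda>\<omega>. H \<omega> $ j * (X \<omega> $ j - m \<omega> $ j))" for j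
    by (intro integrable_mult sq_integrable_diff sq_integrable_vec_nth H X m)
  have "(\<integral>\<omega>. H \<omega> $ j * (X \<omega> $ j - m \<omega> $ j) \<partial>M) = 0" for j
  proof (rule integral_mult_diff_cond_exp_eq_0)
    show "AE \<omega> in M. real_cond_exp M F (\<lambda>\<omega>. X \<omega> $ j) \<omega> = m \<omega> $ j"
      using cond by auto
  qed (use HF H X m in \<open>auto intro!: integrable_mult sq_integrable_vec_nth dest: sq_integrableD(1)\<close>)
  then show ?thesis
    using int by (simp add: inner_vec_def)
qed

lemma real_cond_exp_indicator_bounds:
  assumes "X \<in> measurable M N" "B \<in> sets N"
  shows "AE \<omega> in M. 0 \<le> real_cond_exp M F (\<lambda>\<omega>. indicator B (X \<omega>)) \<omega> \<and>
                     real_cond_exp M F (\<lambda>\<omega>. indicator B (X \<omega>)) \<omega> \<le> 1"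
proof -
  have "AE \<omega> in M. 0 \<le> real_cond_exp M F (\<lambda>\<omega>. indicator B (X \<omega>)) \<omega>"
    by (rule real_cond_exp_ge_c[OF integrable_indicator_comp[OF assms]]) auto
  moreover have "AE \<omega> in M. real_cond_exp M F (\<lambda>\<omega>. indicator B (X \<omega>)) \<omega> \<le> 1"
    by (rule real_cond_exp_le_c[OF integrable_indicator_comp[OF assms]]) (auto simp: indicator_def)
  ultimately show ?thesis by eventually_elim auto
qed

lemma cond_indep_vars_integral_prod:
  fixes X :: "'i \<Rightarrow> 'a \<Rightarrow> 'b::topological_space"
  assumes "cond_indep_vars M F X I" "\<And>i. i \<in> I \<Longrightarrow> B i \<in> sets borel"
  shows "(\<integral>\<omega>. (\<Prod>i\<in>I. indicator (B i) (X i \<omega>)) \<partial>M) =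
    (\<integral>\<omega>. (\<Prod>i\<in>I. real_cond_exp M F (\<lambda>\<omega>. indicator (B i) (X i \<omega>)) \<omega>) \<partial>M)"
proof -
  have restrict: "(\<integral>\<omega>. indicator (space M) \<omega> * h \<omega> \<partial>M) = (\<integral>\<omega>. h \<omega> \<partial>M)" for h :: "'a \<Rightarrow> real"
    by (rule Bochner_Integration.integral_cong) auto
  have "space M \<in> sets F" by (metis sets.top subalg subalgebra_def)
  then have "(\<integral>\<omega>. indicator (space M) \<omega> * (\<Prod>i\<in>I. indicator (B i) (X i \<omega>)) \<partial>M) =
      (\<integral>\<omega>. indicator (space M) \<omega> *
        (\<Prod>i\<in>I. real_cond_exp M F (\<lambda>\<omega>. indicator (B i) (X i \<omega>)) \<omega>) \<partial>M)"
    using assms unfolding cond_indep_vars_def by blast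
  then show ?thesis by (simp only: restrict)
qed

lemma cond_indep_vars_pair:
  fixes X :: "'i \<Rightarrow> 'a \<Rightarrow> 'b::topological_space"
  assumes ci: "cond_indep_vars M F X I" and I: "finite I" "i \<in> I" "j \<in> I" "i \<noteq> j"
    and B: "B \<in> sets borel" and C: "C \<in> sets borel"
  shows "(\<integral>\<omega>. indicator B (X i \<omega>) * indicator C (X j \<omega>) \<partial>M) =
    (\<integral>\<omega>. real_cond_exp M F (\<lambda>\<omega>. indicator B (X i \<omega>)) \<omega> *
          real_cond_exp M F (\<lambda>\<omega>. indicator C (X j \<omega>)) \<omega> \<partial>M)"
proof -
  define BB where "BB l = (if l = i then B else if l = j then C else UNIV)" for l
  have "(\<Prod>l\<in>I. indicator (BB l) (X l \<omega>)) = indicator B (X i \<omega>) * (indicator C (X j \<omega>) :: real)"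
    for \<omega>
    using prod_eq_mult_if_others_one[OF I, of "\<lambda>l. indicator (BB l) (X l \<omega>)"] I(4)
    by (simp add: BB_def)
  then have "(\<integral>\<omega>. indicator B (X i \<omega>) * indicator C (X j \<omega>) \<partial>M)
      = (\<integral>\<omega>. (\<Prod>l\<in>I. indicator (BB l) (X l \<omega>) :: real) \<partial>M)"
    by simp
  also have "\<dots> = (\<integral>\<omega>. (\<Prod>l\<in>I. real_cond_exp M F (\<lambda>\<omega>. indicator (BB l) (X l \<omega>)) \<omega>) \<partial>M)"
    by (rule cond_indep_vars_integral_prod[OF ci]) (use B C in \<open>simp add: BB_def\<close>)
  also have "\<dots> = (\<integral>\<omega>. real_cond_exp M F (\<lambda>\<omega>. indicator B (X i \<omega>)) \<omega> *
          real_cond_exp M F (\<lambda>\<omega>. indicator C (X j \<omega>)) \<omega> \<partial>M)"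
  proof (rule integral_cong_AE)
    have "AE \<omega> in M. \<forall>l\<in>I - {i, j}. real_cond_exp M F (\<lambda>\<omega>. indicator (BB l) (X l \<omega>)) \<omega> = 1"
    proof (rule AE_finite_allI)
      fix l assume "l \<in> I - {i, j}"
      then have "(\<lambda>\<omega>. indicator (BB l) (X l \<omega>) :: real) = (\<lambda>_. 1)" by (auto simp: BB_def)
      then show "AE \<omega> in M. real_cond_exp M F (\<lambda>\<omega>. indicator (BB l) (X l \<omega>)) \<omega> = 1"
        by (simp add: real_cond_exp_F_meas)
    qed (use I in auto)
    then show "AE \<omega> in M. (\<Prod>l\<in>I. real_cond_exp M F (\<lambda>\<omega>. indicator (BB l) (X l \<omega>)) \<omega>) =
        real_cond_exp M F (\<lambda>\<omega>. indicator B (X i \<omega>)) \<omega> *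
          real_cond_exp M F (\<lambda>\<omega>. indicator C (X j \<omega>)) \<omega>"
    proof eventually_elim
      case (elim \<omega>)
      have "(\<Prod>l\<in>I. real_cond_exp M F (\<lambda>\<omega>. indicator (BB l) (X l \<omega>)) \<omega>) =
          real_cond_exp M F (\<lambda>\<omega>. indicator (BB i) (X i \<omega>)) \<omega> *
          real_cond_exp M F (\<lambda>\<omega>. indicator (BB j) (X j \<omega>)) \<omega>"
        by (rule prod_eq_mult_if_others_one[OF I]) (use elim in auto)
      then show ?case using I(4) by (simp add: BB_def)
    qed
  qed measurable
  finally show ?thesis .
qed

lemma cond_indep_indicator_centered:
  assumes indep: "(\<integral>\<omega>. indicator B (X \<omega>) * indicator C (Y \<omega>) \<partial>M) =
      (\<integral>\<omega>. real_cond_exp M F (\<lambda>\<omega>. indicator B (X \<omega>)) \<omega> *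
            real_cond_exp M F (\<lambda>\<omega>. indicator C (Y \<omega>)) \<omega> \<partial>M)"
    and [measurable]: "X \<in> measurable M N" "Y \<in> measurable M N'" "B \<in> sets N" "C \<in> sets N'"
  shows "(\<integral>\<omega>. indicator C (Y \<omega>) *
      (indicator B (X \<omega>) - real_cond_exp M F (\<lambda>\<omega>. indicator B (X \<omega>)) \<omega>) \<partial>M) = 0"
proof -
  let ?pB = "real_cond_exp M F (\<lambda>\<omega>. indicator B (X \<omega>))"
  have int_pB: "integrable M ?pB"
    by (rule real_cond_exp_int(1)[OF integrable_indicator_comp[of X N B]]) auto
  have "(\<integral>\<omega>. ?pB \<omega> * real_cond_exp M F (\<lambda>\<omega>. indicator C (Y \<omega>)) \<omega> \<partial>M)
      = (\<integral>\<omega>. ?pB \<omega> * indicator C (Y \<omega>) \<partial>M)"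
    using integrable_indicator_comp_mult[OF int_pB, of Y N' C]
    by (intro real_cond_exp_intg(2)) (auto simp: mult.commute)
  moreover have "integrable M (\<lambda>\<omega>. indicator C (Y \<omega>) * indicator B (X \<omega>) :: real)"
    using integrable_indicator_comp_mult[OF integrable_indicator_comp[of X N B], of Y N' C] by simp
  ultimately show ?thesis
    using indep integrable_indicator_comp_mult[OF int_pB, of Y N' C]
    by (simp add: right_diff_distrib mult.commute)
qed

lemma integral_fun_mult_indicator_eq_cond_exp:
  fixes X :: "'a \<Rightarrow> 'b::topological_space" and Y :: "'a \<Rightarrow> 'c::topological_space"
    and \<phi> :: "'c \<Rightarrow> real"
  assumes indep: "\<And>C. C \<in> sets borel \<Longrightarrow>
      (\<integral>\<omega>. indicator B (X \<omega>) * indicator C (Y \<omega>) \<partial>M) =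
      (\<integral>\<omega>. real_cond_exp M F (\<lambda>\<omega>. indicator B (X \<omega>)) \<omega> *
            real_cond_exp M F (\<lambda>\<omega>. indicator C (Y \<omega>)) \<omega> \<partial>M)"
    and [measurable]: "X \<in> borel_measurable M" "Y \<in> borel_measurable M" "B \<in> sets borel"
      "\<phi> \<in> borel_measurable borel"
    and \<phi>Y: "integrable M (\<lambda>\<omega>. \<phi> (Y \<omega>))"
  shows "(\<integral>\<omega>. \<phi> (Y \<omega>) * indicator B (X \<omega>) \<partial>M) =
    (\<integral>\<omega>. \<phi> (Y \<omega>) * real_cond_exp M F (\<lambda>\<omega>. indicator B (X \<omega>)) \<omega> \<partial>M)"
proof -
  let ?pB = "real_cond_exp M F (\<lambda>\<omega>. indicator B (X \<omega>))"
  have int1: "integrable M (\<lambda>\<omega>. \<phi> (Y \<omega>) * indicator B (X \<omega>))"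
    using integrable_indicator_comp_mult[OF \<phi>Y, of X borel B] by (simp add: mult.commute)
  have bnd: "AE \<omega> in M. 0 \<le> ?pB \<omega> \<and> ?pB \<omega> \<le> 1"
    by (rule real_cond_exp_indicator_bounds[of X borel B]) auto
  have int2: "integrable M (\<lambda>\<omega>. \<phi> (Y \<omega>) * ?pB \<omega>)"
    using \<phi>Y
  proof (rule Bochner_Integration.integrable_bound)
    show "AE \<omega> in M. norm (\<phi> (Y \<omega>) * ?pB \<omega>) \<le> norm (\<phi> (Y \<omega>))"
      using bnd by eventually_elim (auto simp: abs_mult intro!: mult_left_le)
  qed measurable
  have orth: "(\<integral>\<omega>. indicator C (Y \<omega>) * (indicator B (X \<omega>) - ?pB \<omega>) \<partial>M) = 0"
    if "C \<in> sets borel" for C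
    by (rule cond_indep_indicator_centered[OF indep[OF that], of borel borel]) (use that in auto)
  have "(\<integral>\<omega>. \<phi> (Y \<omega>) * (indicator B (X \<omega>) - ?pB \<omega>) \<partial>M) = 0"
  proof (rule integral_fun_mult_eq_0[OF _ _ orth])
    show "integrable M (\<lambda>\<omega>. indicator B (X \<omega>) - ?pB \<omega>)"
      using integrable_indicator_comp[of X borel B]
        real_cond_exp_int(1)[OF integrable_indicator_comp[of X borel B]] by auto
    show "integrable M (\<lambda>\<omega>. \<phi> (Y \<omega>) * (indicator B (X \<omega>) - ?pB \<omega>))"
      using int1 int2 by (simp add: right_diff_distrib)
  qed simp_all
  then show ?thesis using int1 int2 by (simp add: right_diff_distrib)
qed

lemma integral_indicator_mult_centered_eq_0:
  fixes X :: "'a \<Rightarrow> 'b::topological_space" and Y m :: "'a \<Rightarrow> real^'n"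
  assumes indep: "\<And>C. C \<in> sets borel \<Longrightarrow>
      (\<integral>\<omega>. indicator B (X \<omega>) * indicator C (Y \<omega>) \<partial>M) =
      (\<integral>\<omega>. real_cond_exp M F (\<lambda>\<omega>. indicator B (X \<omega>)) \<omega> *
            real_cond_exp M F (\<lambda>\<omega>. indicator C (Y \<omega>)) \<omega> \<partial>M)"
    and [measurable]: "X \<in> borel_measurable M" "B \<in> sets borel" "m \<in> borel_measurable F"
    and Y: "sq_integrable M Y" and m: "sq_integrable M m"
    and cond: "AE \<omega> in M. \<forall>j. real_cond_exp M F (\<lambda>\<omega>. Y \<omega> $ j) \<omega> = m \<omega> $ j"
  shows "(\<integral>\<omega>. indicator B (X \<omega>) * (Y \<omega> $ j - m \<omega> $ j) \<partial>M) = 0"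
proof -
  let ?pB = "real_cond_exp M F (\<lambda>\<omega>. indicator B (X \<omega>))"
  have [measurable]: "Y \<in> borel_measurable M" "m \<in> borel_measurable M"
    using Y m by (auto dest: sq_integrableD(1))
  have Yj: "integrable M (\<lambda>\<omega>. Y \<omega> $ j)" and mj: "integrable M (\<lambda>\<omega>. m \<omega> $ j)"
    using Y m by (auto intro: sq_integrable_imp_integrable sq_integrable_vec_nth)
  have bnd: "AE \<omega> in M. 0 \<le> ?pB \<omega> \<and> ?pB \<omega> \<le> 1"
    by (rule real_cond_exp_indicator_bounds[of X borel B]) auto
  have bounded: "integrable M (\<lambda>\<omega>. ?pB \<omega> * Z \<omega>)" if Z: "integrable M Z" for Z
    using Z
  proof (rule Bochner_Integration.integrable_bound)
    show "AE \<omega> in M. norm (?pB \<omega> * Z \<omega>) \<le> norm (Z \<omega>)"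
      using bnd by eventually_elim (auto simp: abs_mult intro!: mult_left_le_one_le)
  qed (use Z in measurable)
  have "(\<integral>\<omega>. Y \<omega> $ j * indicator B (X \<omega>) \<partial>M) = (\<integral>\<omega>. Y \<omega> $ j * ?pB \<omega> \<partial>M)"
    by (rule integral_fun_mult_indicator_eq_cond_exp[OF indep, where \<phi>="\<lambda>y. y $ j"])
      (use Yj in auto)
  also have "\<dots> = (\<integral>\<omega>. ?pB \<omega> * real_cond_exp M F (\<lambda>\<omega>. Y \<omega> $ j) \<omega> \<partial>M)"
    using bounded[OF Yj] by (subst real_cond_exp_intg(2)) (auto simp: mult.commute)
  also have "\<dots> = (\<integral>\<omega>. ?pB \<omega> * m \<omega> $ j \<partial>M)"
    using cond by (intro integral_cong_AE) auto
  also have "\<dots> = (\<integral>\<omega>. m \<omega> $ j * indicator B (X \<omega>) \<partial>M)"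
    using integrable_indicator_comp_mult[OF mj, of X borel B]
    by (subst real_cond_exp_intg(2)[symmetric]) (auto simp: mult.commute)
  finally show ?thesis
    using integrable_indicator_comp_mult[OF Yj, of X borel B]
      integrable_indicator_comp_mult[OF mj, of X borel B]
    by (simp add: right_diff_distrib mult.commute)
qed

lemma integral_inner_centered_eq_0_if_cond_indep:
  fixes X Y mX mY :: "'a \<Rightarrow> real^'n"
  assumes indep: "\<And>B C. B \<in> sets borel \<Longrightarrow> C \<in> sets borel \<Longrightarrow>
      (\<integral>\<omega>. indicator B (X \<omega>) * indicator C (Y \<omega>) \<partial>M) =
      (\<integral>\<omega>. real_cond_exp M F (\<lambda>\<omega>. indicator B (X \<omega>)) \<omega> *
            real_cond_exp M F (\<lambda>\<omega>. indicator C (Y \<omega>)) \<omega> \<partial>M)"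
    and X: "sq_integrable M X" and Y: "sq_integrable M Y"
    and mX: "sq_integrable M mX" "mX \<in> borel_measurable F"
    and mY: "sq_integrable M mY" "mY \<in> borel_measurable F"
    and condX: "AE \<omega> in M. \<forall>j. real_cond_exp M F (\<lambda>\<omega>. X \<omega> $ j) \<omega> = mX \<omega> $ j"
    and condY: "AE \<omega> in M. \<forall>j. real_cond_exp M F (\<lambda>\<omega>. Y \<omega> $ j) \<omega> = mY \<omega> $ j"
  shows "(\<integral>\<omega>. (X \<omega> - mX \<omega>) \<bullet> (Y \<omega> - mY \<omega>) \<partial>M) = 0"
proof -
  have [measurable]: "X \<in> borel_measurable M" using X by (rule sq_integrableD)
  have sq: "sq_integrable M (\<lambda>\<omega>. Y \<omega> $ j - mY \<omega> $ j)" "sq_integrable M (\<lambda>\<omega>. X \<omega> $ j)"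
    "sq_integrable M (\<lambda>\<omega>. mX \<omega> $ j)" for j
    using X Y mX mY by (auto intro!: sq_integrable_diff sq_integrable_vec_nth)
  have "(\<integral>\<omega>. X \<omega> $ j * (Y \<omega> $ j - mY \<omega> $ j) \<partial>M) = 0" for j
  proof (rule integral_fun_mult_eq_0[where \<phi>="\<lambda>x. x $ j"])
    show "(\<integral>\<omega>. indicator B (X \<omega>) * (Y \<omega> $ j - mY \<omega> $ j) \<partial>M) = 0" if "B \<in> sets borel" for B
      by (rule integral_indicator_mult_centered_eq_0[OF indep[OF that] sq_integrableD(1)[OF X] that
          mY(2) Y mY(1) condY])
  qed (use sq in \<open>auto intro: sq_integrable_imp_integrable integrable_mult\<close>)
  moreover have "(\<integral>\<omega>. mX \<omega> $ j * (Y \<omega> $ j - mY \<omega> $ j) \<partial>M) = 0" for j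
    using condY mX mY Y sq
    by (intro integral_mult_diff_cond_exp_eq_0)
      (auto intro!: integrable_mult sq_integrable_vec_nth dest: sq_integrableD(1))
  ultimately have "(\<integral>\<omega>. (X \<omega> $ j - mX \<omega> $ j) * (Y \<omega> $ j - mY \<omega> $ j) \<partial>M) = 0" for j
    using sq by (simp add: left_diff_distrib integrable_mult)
  moreover have "integrable M (\<lambda>\<omega>. (X \<omega> $ j - mX \<omega> $ j) * (Y \<omega> $ j - mY \<omega> $ j))" for j
    by (rule integrable_mult[OF sq_integrable_diff[OF sq(2,3)] sq(1)])
  ultimately show ?thesis by (simp add: inner_vec_def)
qed

lemma integral_le_if_nn_cond_exp_le:
  assumes [measurable]: "h \<in> borel_measurable M" and h0: "\<And>\<omega>. 0 \<le> h \<omega>" and c: "0 \<le> c"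
    and bound: "AE \<omega> in M. nn_cond_exp M F (\<lambda>\<omega>. ennreal (h \<omega>)) \<omega> \<le> ennreal c"
  shows "integrable M h" "(\<integral>\<omega>. h \<omega> \<partial>M) \<le> c * measure M (space M)"
proof -
  have "(\<integral>\<^sup>+\<omega>. ennreal (h \<omega>) \<partial>M) = (\<integral>\<^sup>+\<omega>. 1 * nn_cond_exp M F (\<lambda>\<omega>. ennreal (h \<omega>)) \<omega> \<partial>M)"
    using nn_cond_exp_intg[of "\<lambda>_. 1" "\<lambda>\<omega>. ennreal (h \<omega>)"] by simp
  also have "\<dots> \<le> (\<integral>\<^sup>+\<omega>. ennreal c \<partial>M)"
    using bound by (intro nn_integral_mono_AE) auto
  also have "\<dots> = ennreal (c * measure M (space M))"
    using c by (simp add: emeasure_eq_measure ennreal_mult)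
  finally have le: "(\<integral>\<^sup>+\<omega>. ennreal (h \<omega>) \<partial>M) \<le> ennreal (c * measure M (space M))" .
  show int: "integrable M h"
    using le h0 by (intro integrableI_nonneg) (auto simp: top.not_eq_extremum le_less_trans)
  have "ennreal (\<integral>\<omega>. h \<omega> \<partial>M) \<le> ennreal (c * measure M (space M))"
    using le nn_integral_eq_integral[OF int] h0 by simp
  then show "(\<integral>\<omega>. h \<omega> \<partial>M) \<le> c * measure M (space M)"
    using c by (simp add: ennreal_le_iff)
qed

end

section \<open>Haar-distributed projections\<close>

locale haar_projection = prob_space M
  for M :: "'w measure" and P :: "'w \<Rightarrow> real^'r^'d" +
  assumes P_measurable [measurable]: "P \<in> borel_measurable M"
    and haar: "haar_stiefel (distr M borel P)"
begin

lemma AE_in_stiefel: "AE \<omega> in M. P \<omega> \<in> stiefel"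
proof -
  have [measurable]: "stiefel \<in> sets (borel :: (real^'r^'d) measure)" by (rule stiefel_in_borel)
  have "emeasure M (P -` stiefel \<inter> space M) = 1"
    using haar unfolding haar_stiefel_def by (simp add: emeasure_distr)
  moreover have "P -` stiefel \<inter> space M \<in> events" by measurable
  ultimately have "AE \<omega> in M. \<omega> \<in> P -` stiefel \<inter> space M"
    by (subst AE_in_set_eq_1) (simp_all add: emeasure_eq_measure)
  then show ?thesis by auto
qed

lemma integral_comp_orthogonal:
  fixes h :: "real^'r^'d \<Rightarrow> real"
  assumes "orthogonal_matrix Q" and [measurable]: "h \<in> borel_measurable borel"
  shows "(\<integral>\<omega>. h (P \<omega>) \<partial>M) = (\<integral>\<omega>. h (Q ** P \<omega>) \<partial>M)"
proof -
  have "(\<integral>\<omega>. h (P \<omega>) \<partial>M) = integral\<^sup>L (distr M borel P) h"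
    by (rule integral_distr[symmetric]) measurable
  also have "\<dots> = integral\<^sup>L (distr (distr M borel P) borel (\<lambda>x. Q ** x)) h"
    using haar assms(1) unfolding haar_stiefel_def by auto
  also have "\<dots> = integral\<^sup>L (distr M borel P) (\<lambda>x. h (Q ** x))"
    by (rule integral_distr) measurable
  also have "\<dots> = (\<integral>\<omega>. h (Q ** P \<omega>) \<partial>M)"
    by (rule integral_distr) measurable
  finally show ?thesis .
qed

lemma borel_measurable_proj_of_nth: "(\<lambda>x::real^'r^'d. proj_of x $ a $ b) \<in> borel_measurable borel"
  by measurable

lemma integrable_proj_of_nth: "integrable M (\<lambda>\<omega>. proj_of (P \<omega>) $ a $ b)"
proof (rule integrable_const_bound[of _ "real CARD('r)"])
  show "AE \<omega> in M. norm (proj_of (P \<omega>) $ a $ b) \<le> real CARD('r)"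
    using AE_in_stiefel by eventually_elim (simp add: abs_proj_of_nth_le)
qed measurable

lemma integral_proj_of_nth_off_diagonal:
  assumes "a \<noteq> b"
  shows "(\<integral>\<omega>. proj_of (P \<omega>) $ a $ b \<partial>M) = 0"
proof -
  have "(\<integral>\<omega>. proj_of (P \<omega>) $ a $ b \<partial>M) = (\<integral>\<omega>. proj_of (sign_flip a ** P \<omega>) $ a $ b \<partial>M)"
    by (rule integral_comp_orthogonal[OF orthogonal_matrix_sign_flip]) measurable
  also have "\<dots> = (\<integral>\<omega>. - (proj_of (P \<omega>) $ a $ b) \<partial>M)"
    by (rule Bochner_Integration.integral_cong[OF refl])
      (use assms in \<open>simp add: proj_of_nth sign_flip_mult_nth sum_negf[symmetric]\<close>)
  finally show ?thesis by simp
qed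

lemma integral_proj_of_nth_diagonal:
  "(\<integral>\<omega>. proj_of (P \<omega>) $ a $ a \<partial>M) = real CARD('r) / real CARD('d)"
proof -
  have same: "(\<integral>\<omega>. proj_of (P \<omega>) $ b $ b \<partial>M) = (\<integral>\<omega>. proj_of (P \<omega>) $ a $ a \<partial>M)" for b
  proof -
    have "(\<integral>\<omega>. proj_of (P \<omega>) $ b $ b \<partial>M) = (\<integral>\<omega>. proj_of (swap_rows b a ** P \<omega>) $ b $ b \<partial>M)"
      by (rule integral_comp_orthogonal[OF orthogonal_matrix_swap_rows]) measurable
    also have "\<dots> = (\<integral>\<omega>. proj_of (P \<omega>) $ a $ a \<partial>M)"
      by (rule Bochner_Integration.integral_cong[OF refl])
        (simp add: proj_of_nth swap_rows_mult_nth swap_index_def)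
    finally show ?thesis .
  qed
  have "real CARD('d) * (\<integral>\<omega>. proj_of (P \<omega>) $ a $ a \<partial>M)
      = (\<Sum>b\<in>UNIV. (\<integral>\<omega>. proj_of (P \<omega>) $ b $ b \<partial>M))"
    by (simp add: sum.cong[OF refl same])
  also have "\<dots> = (\<integral>\<omega>. (\<Sum>b\<in>UNIV. proj_of (P \<omega>) $ b $ b) \<partial>M)"
    by (rule Bochner_Integration.integral_sum[symmetric]) (rule integrable_proj_of_nth)
  also have "\<dots> = (\<integral>\<omega>. real CARD('r) \<partial>M)"
    using AE_in_stiefel by (intro integral_cong_AE) (auto simp: trace_proj_of)
  finally show ?thesis by (simp add: prob_space field_simps)
qed

lemma integral_proj_of_nth:
  "(\<integral>\<omega>. proj_of (P \<omega>) $ a $ b \<partial>M) = (if a = b then real CARD('r) / real CARD('d) else 0)"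
  by (simp add: integral_proj_of_nth_diagonal integral_proj_of_nth_off_diagonal)

lemma indep_var_proj_of_nth:
  assumes F: "subalgebra M F"
    and indep: "\<forall>A\<in>sets F. \<forall>B\<in>sets borel.
      prob (A \<inter> (P -` B \<inter> space M)) = prob A * prob (P -` B \<inter> space M)"
    and X: "X \<in> borel_measurable F"
  shows "indep_var borel X borel (\<lambda>\<omega>. proj_of (P \<omega>) $ a $ b)"
proof -
  have [measurable]: "X \<in> borel_measurable M" by (rule measurable_from_subalg[OF F X])
  let ?Y = "\<lambda>\<omega>. proj_of (P \<omega>) $ a $ b"
  have "space F = space M" using F by (simp add: subalgebra_def)
  then have S1: "sigma_sets (space M) {X -` A \<inter> space M | A. A \<in> sets borel} \<subseteq> sets F"
    using sets.sigma_sets_subset[of "{X -` A \<inter> space M | A. A \<in> sets borel}" F]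
      measurable_sets[OF X] by auto
  have S2: "sigma_sets (space M) {?Y -` A \<inter> space M | A. A \<in> sets borel}
      \<subseteq> {P -` B \<inter> space M | B. B \<in> sets borel}"
  proof -
    have "{?Y -` A \<inter> space M | A. A \<in> sets borel} \<subseteq> sets (vimage_algebra (space M) P borel)"
    proof safe
      fix A :: "real set" assume "A \<in> sets borel"
      then have "?Y -` A \<inter> space M = P -` ((\<lambda>x. proj_of x $ a $ b) -` A) \<inter> space M"
        "(\<lambda>x::real^'r^'d. proj_of x $ a $ b) -` A \<in> sets borel"
        using measurable_sets[OF borel_measurable_proj_of_nth] by auto
      then show "?Y -` A \<inter> space M \<in> sets (vimage_algebra (space M) P borel)"
        by (auto simp: sets_vimage_algebra2)
    qed
    from sets.sigma_sets_subset[OF this] show ?thesis by (simp add: sets_vimage_algebra2)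
  qed
  have "indep_set (sigma_sets (space M) {X -` A \<inter> space M | A. A \<in> sets borel})
      (sigma_sets (space M) {?Y -` A \<inter> space M | A. A \<in> sets borel})"
    unfolding indep_sets2_eq
  proof (intro conjI ballI)
    show "sigma_sets (space M) {X -` A \<inter> space M | A. A \<in> sets borel} \<subseteq> events"
      using S1 F by (auto simp: subalgebra_def)
    show "sigma_sets (space M) {?Y -` A \<inter> space M | A. A \<in> sets borel} \<subseteq> events"
      using S2 by auto
  qed (use S1 S2 indep in blast)
  then show ?thesis unfolding indep_var_eq by simp
qed

lemma integral_inner_proj_of:
  assumes F: "subalgebra M F"
    and indep: "\<forall>A\<in>sets F. \<forall>B\<in>sets borel.
      prob (A \<inter> (P -` B \<inter> space M)) = prob A * prob (P -` B \<inter> space M)"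
    and uF [measurable]: "u \<in> borel_measurable F" and u: "sq_integrable M u"
  shows "(\<integral>\<omega>. u \<omega> \<bullet> (proj_of (P \<omega>) *v u \<omega>) \<partial>M)
    = real CARD('r) / real CARD('d) * (\<integral>\<omega>. (norm (u \<omega>))\<^sup>2 \<partial>M)"
proof -
  define \<delta> where "\<delta> = real CARD('r) / real CARD('d)"
  have uu: "integrable M (\<lambda>\<omega>. u \<omega> $ a * u \<omega> $ b)" for a b
    by (intro integrable_mult sq_integrable_vec_nth u)
  have ind: "indep_var borel (\<lambda>\<omega>. u \<omega> $ a * u \<omega> $ b) borel (\<lambda>\<omega>. proj_of (P \<omega>) $ a $ b)" for a b
    by (intro indep_var_proj_of_nth[OF F indep]) measurable
  have int: "integrable M (\<lambda>\<omega>. u \<omega> $ a * u \<omega> $ b * proj_of (P \<omega>) $ a $ b)" for a b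
    by (rule indep_var_integrable[OF ind uu integrable_proj_of_nth])
  have E: "(\<integral>\<omega>. u \<omega> $ a * u \<omega> $ b * proj_of (P \<omega>) $ a $ b \<partial>M)
      = (\<integral>\<omega>. u \<omega> $ a * u \<omega> $ b \<partial>M) * (if a = b then \<delta> else 0)" for a b
    using indep_var_lebesgue_integral[OF ind uu integrable_proj_of_nth]
    by (simp add: integral_proj_of_nth \<delta>_def)
  have "u \<omega> \<bullet> (proj_of (P \<omega>) *v u \<omega>)
      = (\<Sum>a\<in>UNIV. \<Sum>b\<in>UNIV. u \<omega> $ a * u \<omega> $ b * proj_of (P \<omega>) $ a $ b)" for \<omega>
    by (simp add: inner_vec_def matrix_vector_mult_def sum_distrib_left ac_simps)
  then have "(\<integral>\<omega>. u \<omega> \<bullet> (proj_of (P \<omega>) *v u \<omega>) \<partial>M)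
      = (\<Sum>a\<in>UNIV. \<Sum>b\<in>UNIV. (\<integral>\<omega>. u \<omega> $ a * u \<omega> $ b \<partial>M) * (if a = b then \<delta> else 0))"
    using int by (simp add: Bochner_Integration.integral_sum integrable_sum E)
  also have "\<dots> = (\<Sum>a\<in>UNIV. \<Sum>b\<in>UNIV. if a = b then \<delta> * (\<integral>\<omega>. u \<omega> $ a * u \<omega> $ a \<partial>M) else 0)"
    by (intro sum.cong refl) auto
  also have "\<dots> = \<delta> * (\<integral>\<omega>. (norm (u \<omega>))\<^sup>2 \<partial>M)"
    using uu by (simp add: power2_norm_eq_inner inner_vec_def sum_distrib_left
        Bochner_Integration.integral_sum)
  finally show ?thesis unfolding \<delta>_def .
qed

lemma integral_power2_norm_proj_of:
  assumes F: "subalgebra M F"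
    and indep: "\<forall>A\<in>sets F. \<forall>B\<in>sets borel.
      prob (A \<inter> (P -` B \<inter> space M)) = prob A * prob (P -` B \<inter> space M)"
    and uF: "u \<in> borel_measurable F" and u: "sq_integrable M u"
  shows "(\<integral>\<omega>. (norm (proj_of (P \<omega>) *v u \<omega>))\<^sup>2 \<partial>M)
    = real CARD('r) / real CARD('d) * (\<integral>\<omega>. (norm (u \<omega>))\<^sup>2 \<partial>M)"
proof -
  have [measurable]: "u \<in> borel_measurable M" using u by (rule sq_integrableD)
  have "(\<integral>\<omega>. (norm (proj_of (P \<omega>) *v u \<omega>))\<^sup>2 \<partial>M) = (\<integral>\<omega>. u \<omega> \<bullet> (proj_of (P \<omega>) *v u \<omega>) \<partial>M)"
    using AE_in_stiefel by (intro integral_cong_AE) (auto simp: power2_norm_proj_of)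
  then show ?thesis using integral_inner_proj_of[OF assms] by simp
qed

end

locale fedslop =
  fixes M :: "'w measure"
    and P :: "nat \<Rightarrow> 'w \<Rightarrow> real^'r^'d"
    and g :: "nat \<Rightarrow> nat \<Rightarrow> nat \<Rightarrow> 'w \<Rightarrow> real^'d"
    and F :: "nat \<Rightarrow> real^'d \<Rightarrow> real"
    and gradF :: "nat \<Rightarrow> real^'d \<Rightarrow> real^'d"
    and th0 :: "real^'d"
    and \<mu> \<eta> L \<sigma>L \<sigma>G fstar :: real
    and N \<tau> :: nat
    and f :: "real^'d \<Rightarrow> real" and gradf :: "real^'d \<Rightarrow> real^'d"
    and \<delta> S :: real
    and \<theta> :: "nat \<Rightarrow> 'w \<Rightarrow> real^'d"
    and \<theta>loc :: "nat \<Rightarrow> nat \<Rightarrow> nat \<Rightarrow> 'w \<Rightarrow> real^'d"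
    and Fpast :: "nat \<Rightarrow> nat \<Rightarrow> 'w measure"
  assumes f_def: "f = (\<lambda>x. (1 / real N) * (\<Sum>i<N. F i x))"
    and gradf_def: "gradf = (\<lambda>x. (1 / real N) *\<^sub>R (\<Sum>i<N. gradF i x))"
    and \<delta>_def: "\<delta> = real CARD('r) / real CARD('d)"
    and S_def: "S = S_tau \<mu> \<tau>"
    and \<theta>_def: "\<theta> = (\<lambda>t \<omega>. server_iter \<mu> \<eta> N \<tau> th0 (\<lambda>t. P t \<omega>) (\<lambda>t i s. g t i s \<omega>) t)"
    and \<theta>loc_def: "\<theta>loc = (\<lambda>t i s \<omega>. client_iter \<mu> \<eta> N \<tau> th0 (\<lambda>t. P t \<omega>) (\<lambda>t i s. g t i s \<omega>) t i s)"
    and Fpast_def: "Fpast = (\<lambda>t s. past_alg M N \<tau> P g t s)"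
    and N_pos: "N \<ge> 1" and tau_pos: "\<tau> \<ge> 1"
    and r_le_d: "CARD('r) \<le> CARD('d)"
    and mu: "0 \<le> \<mu>" "\<mu> < 1" and eta_pos: "\<eta> > 0" and L_pos: "L > 0"
    and F_diff: "\<forall>i<N. \<forall>x. (F i has_derivative (\<lambda>h. gradF i x \<bullet> h)) (at x)"
    and f_lower: "\<forall>x. fstar \<le> f x"
    and f_smooth: "\<forall>x y. norm (gradf x - gradf y) \<le> L * norm (x - y)"
    and F_smooth: "\<forall>i<N. \<forall>x y. norm (gradF i x - gradF i y) \<le> L * norm (x - y)"
    and hetero: "\<forall>i<N. \<forall>x. (norm (gradF i x - gradf x))\<^sup>2 \<le> \<sigma>G\<^sup>2"
    and prob: "prob_space M"
    and P_meas: "\<forall>t. P t \<in> borel_measurable M"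
    and g_meas: "\<forall>t i s. g t i s \<in> borel_measurable M"
    and P_haar: "\<forall>t. haar_stiefel (distr M borel (P t))"
    and P_indep: "\<forall>t. \<forall>A \<in> sets (pre_round_alg M N \<tau> P g t). \<forall>B \<in> sets borel.
         measure M (A \<inter> (P t -` B \<inter> space M)) = measure M A * measure M (P t -` B \<inter> space M)"
    and g_unbiased: "\<forall>t. \<forall>i<N. \<forall>s<\<tau>. (\<forall>j. integrable M (\<lambda>\<omega>. g t i s \<omega> $ j)) \<and>
         (AE \<omega> in M. \<forall>j. real_cond_exp M (Fpast t s) (\<lambda>\<omega>. g t i s \<omega> $ j) \<omega> = gradF i (\<theta>loc t i s \<omega>) $ j)"
    and g_var: "\<forall>t. \<forall>i<N. \<forall>s<\<tau>. AE \<omega> in M.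
         nn_cond_exp M (Fpast t s) (\<lambda>\<omega>. ennreal ((norm (g t i s \<omega> - gradF i (\<theta>loc t i s \<omega>)))\<^sup>2)) \<omega>
           \<le> ennreal (\<sigma>L\<^sup>2)"
    and g_cindep: "\<forall>t. \<forall>s<\<tau>. cond_indep_vars M (Fpast t s) (\<lambda>i. g t i s) {..<N}"
    and eta_le: "\<eta> \<le> min (sqrt ((1 - \<mu>\<^sup>2) / (6 * L\<^sup>2 * real \<tau> ^ 3)))
                   (min (1 / (L * S))
                        (sqrt (\<delta> * (1 - \<mu>) * (1 - \<mu>\<^sup>2) * S / (48 * L\<^sup>2 * real \<tau> ^ 4))))"
begin

sublocale prob_space M by (rule prob)

abbreviation "Fpre t \<equiv> pre_round_alg M N \<tau> P g t"

abbreviation "Proj t \<omega> \<equiv> proj_of (P t \<omega>)"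

definition "past_gen t s = {P t' -` A \<inter> space M | t' A. t' \<le> t \<and> A \<in> sets borel} \<union>
      {g t' i s' -` A \<inter> space M | t' i s' A. i < N \<and> A \<in> sets borel \<and>
          ((t' < t \<and> s' < \<tau>) \<or> (t' = t \<and> s' < s))}"

definition "pre_round_gen t = {P t' -` A \<inter> space M | t' A. t' < t \<and> A \<in> sets borel} \<union>
      {g t' i s' -` A \<inter> space M | t' i s' A. i < N \<and> A \<in> sets borel \<and> t' < t \<and> s' < \<tau>}"

lemma past_gen_sets: "past_gen t s \<subseteq> sets M"
  unfolding past_gen_def using P_meas g_meas by (auto intro!: measurable_sets)

lemma pre_round_gen_sets: "pre_round_gen t \<subseteq> sets M"
  unfolding pre_round_gen_def using P_meas g_meas by (auto intro!: measurable_sets)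

lemma Fpast_eq: "Fpast t s = sigma (space M) (past_gen t s)"
  by (simp add: Fpast_def past_alg_def past_gen_def)

lemma Fpre_eq: "Fpre t = sigma (space M) (pre_round_gen t)"
  by (simp add: pre_round_alg_def pre_round_gen_def)

lemma past_gen_Pow: "past_gen t s \<subseteq> Pow (space M)"
  unfolding past_gen_def by auto

lemma pre_round_gen_Pow: "pre_round_gen t \<subseteq> Pow (space M)"
  unfolding pre_round_gen_def by auto

lemma space_Fpast [simp]: "space (Fpast t s) = space M"
  unfolding Fpast_eq using past_gen_Pow by (simp add: space_measure_of_conv)

lemma space_Fpre [simp]: "space (Fpre t) = space M"
  unfolding Fpre_eq using pre_round_gen_Pow by (simp add: space_measure_of_conv)

lemma sets_Fpast: "sets (Fpast t s) = sigma_sets (space M) (past_gen t s)"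
  unfolding Fpast_eq using past_gen_Pow by (simp add: sets_measure_of_conv)

lemma sets_Fpre: "sets (Fpre t) = sigma_sets (space M) (pre_round_gen t)"
  unfolding Fpre_eq using pre_round_gen_Pow by (simp add: sets_measure_of_conv)

lemma subalgebra_Fpre: "subalgebra M (Fpre t)"
  unfolding subalgebra_def sets_Fpre using pre_round_gen_sets by (simp add: sets.sigma_sets_subset)

sublocale Fpast: finite_measure_subalgebra M "Fpast t s" for t s
  by unfold_locales (simp add: subalgebra_def sets_Fpast past_gen_sets sets.sigma_sets_subset)

lemma sets_Fpre_subset_Fpast: "sets (Fpre t) \<subseteq> sets (Fpast t s)"
  unfolding sets_Fpre sets_Fpast pre_round_gen_def past_gen_def
  by (intro sigma_sets_mono' Un_mono Collect_mono;
      blast intro: less_imp_le le_imp_less_Suc less_SucI less_le_trans)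

lemma sets_Fpast_mono: "s \<le> s' \<Longrightarrow> sets (Fpast t s) \<subseteq> sets (Fpast t s')"
  unfolding sets_Fpast past_gen_def by (intro sigma_sets_mono' Un_mono Collect_mono;
      blast intro: less_imp_le le_imp_less_Suc less_SucI less_le_trans)

lemma sets_Fpre_mono: "sets (Fpre t) \<subseteq> sets (Fpre (Suc t))"
  unfolding sets_Fpre pre_round_gen_def by (intro sigma_sets_mono' Un_mono Collect_mono;
      blast intro: less_imp_le le_imp_less_Suc less_SucI less_le_trans)

lemma P_measurable_Fpast: "t' \<le> t \<Longrightarrow> P t' \<in> borel_measurable (Fpast t s)"
  unfolding Fpast_eq by (rule measurable_sigma_of_generators[OF past_gen_Pow]) (auto simp: past_gen_def)

lemma g_measurable_Fpast:
  "i < N \<Longrightarrow> (t' < t \<and> s' < \<tau>) \<or> (t' = t \<and> s' < s) \<Longrightarrow> g t' i s' \<in> borel_measurable (Fpast t s)"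
  unfolding Fpast_eq by (rule measurable_sigma_of_generators[OF past_gen_Pow]) (auto simp: past_gen_def)

lemma P_measurable_Fpre: "t' < t \<Longrightarrow> P t' \<in> borel_measurable (Fpre t)"
  unfolding Fpre_eq
  by (rule measurable_sigma_of_generators[OF pre_round_gen_Pow]) (auto simp: pre_round_gen_def)

lemma g_measurable_Fpre: "i < N \<Longrightarrow> t' < t \<Longrightarrow> s' < \<tau> \<Longrightarrow> g t' i s' \<in> borel_measurable (Fpre t)"
  unfolding Fpre_eq
  by (rule measurable_sigma_of_generators[OF pre_round_gen_Pow]) (auto simp: pre_round_gen_def)

sublocale Pt: haar_projection M "P t" for t
  using P_meas P_haar by unfold_locales auto

lemma gradF_measurable: "i < N \<Longrightarrow> gradF i \<in> borel_measurable borel"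
  using F_smooth L_pos by (intro borel_measurable_lipschitz[of L]) (auto simp: dist_norm)

lemma gradf_measurable: "gradf \<in> borel_measurable borel"
  using f_smooth L_pos by (intro borel_measurable_lipschitz[of L]) (auto simp: dist_norm)

lemma \<theta>_0: "\<theta> 0 \<omega> = th0"
  unfolding \<theta>_def by simp

lemma \<theta>loc_eq_local_iter:
  "\<theta>loc t i s \<omega> = fst (local_iter \<mu> \<eta> (Proj t \<omega>) (\<lambda>s. g t i s \<omega>) (\<theta> t \<omega>) s)"
  unfolding \<theta>loc_def \<theta>_def client_iter_def by simp

lemma \<theta>loc_eq:
  "\<theta>loc t i s \<omega> = \<theta> t \<omega> - \<eta> *\<^sub>R (\<Sum>k<s. momentum_weight \<mu> s k *\<^sub>R (Proj t \<omega> *v g t i k \<omega>))"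
  unfolding \<theta>loc_eq_local_iter fst_local_iter ..

lemma \<theta>_Suc: "\<theta> (Suc t) \<omega> = \<theta> t \<omega> + (1 / real N) *\<^sub>R (\<Sum>i<N. \<theta>loc t i \<tau> \<omega> - \<theta> t \<omega>)"
  unfolding \<theta>loc_eq_local_iter by (simp add: \<theta>_def Let_def)

lemma \<theta>_measurable_Fpre: "\<theta> t \<in> borel_measurable (Fpre t)"
proof (induction t)
  case 0
  then show ?case by (simp add: \<theta>_0)
next
  case (Suc t)
  have [measurable]: "\<theta> t \<in> borel_measurable (Fpre (Suc t))"
    by (rule measurable_mono_sets[OF _ sets_Fpre_mono Suc]) simp
  have [measurable]: "P t \<in> borel_measurable (Fpre (Suc t))" by (rule P_measurable_Fpre) simp
  have [measurable]: "\<theta>loc t i \<tau> \<in> borel_measurable (Fpre (Suc t))" if "i < N" for i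
    unfolding \<theta>loc_eq_local_iter[abs_def]
    by (rule borel_measurable_fst_local_iter) (use g_measurable_Fpre that in auto)
  show ?case
    unfolding \<theta>_Suc[abs_def] by measurable
qed

lemma \<theta>_measurable_Fpast: "\<theta> t \<in> borel_measurable (Fpast t s)"
  by (rule measurable_mono_sets[OF _ sets_Fpre_subset_Fpast \<theta>_measurable_Fpre]) simp

lemma \<theta>loc_measurable_Fpast: "i < N \<Longrightarrow> \<theta>loc t i s \<in> borel_measurable (Fpast t s)"
  unfolding \<theta>loc_eq_local_iter[abs_def]
  by (rule borel_measurable_fst_local_iter)
    (auto intro!: borel_measurable_proj_of P_measurable_Fpast \<theta>_measurable_Fpast g_measurable_Fpast)

lemma gradF_\<theta>loc_measurable_Fpast:
  "i < N \<Longrightarrow> s \<le> s' \<Longrightarrow> (\<lambda>\<omega>. gradF i (\<theta>loc t i s \<omega>)) \<in> borel_measurable (Fpast t s')"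
  using measurable_compose[OF measurable_mono_sets[OF _ sets_Fpast_mono \<theta>loc_measurable_Fpast]
      gradF_measurable] by auto

lemma measurable_M_of_Fpast: "X \<in> borel_measurable (Fpast t s) \<Longrightarrow> X \<in> borel_measurable M"
  by (rule measurable_from_subalg[OF Fpast.subalg])

definition "noise t i s \<omega> = g t i s \<omega> - gradF i (\<theta>loc t i s \<omega>)"

lemma g_eq_noise: "g t i s \<omega> = gradF i (\<theta>loc t i s \<omega>) + noise t i s \<omega>"
  unfolding noise_def by simp

lemma noise_measurable_Fpast: "i < N \<Longrightarrow> s < s' \<Longrightarrow> noise t i s \<in> borel_measurable (Fpast t s')"
  unfolding noise_def[abs_def]
  by (intro borel_measurable_diff g_measurable_Fpast gradF_\<theta>loc_measurable_Fpast) auto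

lemma noise_measurable: "i < N \<Longrightarrow> noise t i s \<in> borel_measurable M"
  by (rule measurable_M_of_Fpast[OF noise_measurable_Fpast[OF _ lessI]])

lemma noise_variance:
  assumes "i < N" "s < \<tau>"
  shows "integrable M (\<lambda>\<omega>. (norm (noise t i s \<omega>))\<^sup>2)" "(\<integral>\<omega>. (norm (noise t i s \<omega>))\<^sup>2 \<partial>M) \<le> \<sigma>L\<^sup>2"
proof -
  have [measurable]: "noise t i s \<in> borel_measurable M" by (rule noise_measurable[OF assms(1)])
  have bound: "AE \<omega> in M. nn_cond_exp M (Fpast t s) (\<lambda>\<omega>. ennreal ((norm (noise t i s \<omega>))\<^sup>2)) \<omega>
      \<le> ennreal (\<sigma>L\<^sup>2)"
    using g_var assms by (simp add: noise_def)
  show "integrable M (\<lambda>\<omega>. (norm (noise t i s \<omega>))\<^sup>2)"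
    by (rule Fpast.integral_le_if_nn_cond_exp_le(1)[OF _ _ _ bound]) auto
  show "(\<integral>\<omega>. (norm (noise t i s \<omega>))\<^sup>2 \<partial>M) \<le> \<sigma>L\<^sup>2"
    using Fpast.integral_le_if_nn_cond_exp_le(2)[OF _ _ _ bound] by (simp add: prob_space)
qed

lemma cond_exp_g:
  "i < N \<Longrightarrow> s < \<tau> \<Longrightarrow>
    AE \<omega> in M. \<forall>j. real_cond_exp M (Fpast t s) (\<lambda>\<omega>. g t i s \<omega> $ j) \<omega> = gradF i (\<theta>loc t i s \<omega>) $ j"
  using g_unbiased by auto

lemma sq_integrable_noise: "i < N \<Longrightarrow> s < \<tau> \<Longrightarrow> sq_integrable M (noise t i s)"
  unfolding sq_integrable_def using noise_measurable noise_variance by auto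

lemma sq_integrable_gradF: "sq_integrable M X \<Longrightarrow> i < N \<Longrightarrow> sq_integrable M (\<lambda>\<omega>. gradF i (X \<omega>))"
  by (rule sq_integrable_lipschitz[OF _ gradF_measurable]) (use F_smooth L_pos in auto)

lemma sq_integrable_gradf: "sq_integrable M X \<Longrightarrow> sq_integrable M (\<lambda>\<omega>. gradf (X \<omega>))"
  by (rule sq_integrable_lipschitz[OF _ gradf_measurable]) (use f_smooth L_pos in auto)

lemma sq_integrable_Proj:
  assumes "sq_integrable M X"
  shows "sq_integrable M (\<lambda>\<omega>. Proj t \<omega> *v X \<omega>)"
proof (rule sq_integrable_bound[OF assms, of _ 1 0])
  show "(\<lambda>\<omega>. Proj t \<omega> *v X \<omega>) \<in> borel_measurable M"
    using sq_integrableD(1)[OF assms] by measurable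
  show "AE \<omega> in M. norm (Proj t \<omega> *v X \<omega>) \<le> 1 * norm (X \<omega>) + 0"
    using Pt.AE_in_stiefel[of t] by eventually_elim (simp add: norm_proj_of_le)
qed auto

lemma sq_integrable_local_steps:
  assumes \<theta>: "sq_integrable M (\<theta> t)" and i: "i < N"
  shows "s \<le> \<tau> \<Longrightarrow> sq_integrable M (\<theta>loc t i s) \<and> (\<forall>k<s. sq_integrable M (g t i k))"
proof (induction s)
  case 0
  then show ?case using \<theta> by (simp add: \<theta>loc_eq[abs_def])
next
  case (Suc s)
  then have IH: "sq_integrable M (\<theta>loc t i s)" "\<forall>k<s. sq_integrable M (g t i k)" by auto
  have "sq_integrable M (\<lambda>\<omega>. gradF i (\<theta>loc t i s \<omega>) + noise t i s \<omega>)"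
    using Suc.prems by (intro sq_integrable_add sq_integrable_gradF IH(1) i sq_integrable_noise) auto
  moreover have "g t i s = (\<lambda>\<omega>. gradF i (\<theta>loc t i s \<omega>) + noise t i s \<omega>)"
    by (rule ext) (rule g_eq_noise)
  ultimately have "sq_integrable M (g t i s)" by (simp only:)
  with IH(2) have g: "\<forall>k<Suc s. sq_integrable M (g t i k)" using less_Suc_eq by auto
  then have "sq_integrable M (\<lambda>\<omega>. \<theta> t \<omega> -
      \<eta> *\<^sub>R (\<Sum>k<Suc s. momentum_weight \<mu> (Suc s) k *\<^sub>R (Proj t \<omega> *v g t i k \<omega>)))"
    by (intro sq_integrable_diff \<theta> sq_integrable_scaleR sq_integrable_sum sq_integrable_Proj) auto
  with g show ?case by (simp add: \<theta>loc_eq[abs_def])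
qed

lemma sq_integrable_\<theta>: "sq_integrable M (\<theta> t)"
proof (induction t)
  case 0
  then show ?case by (simp add: \<theta>_0[abs_def] sq_integrable_const)
next
  case (Suc t)
  then have "sq_integrable M (\<lambda>\<omega>. \<theta> t \<omega> + (1 / real N) *\<^sub>R (\<Sum>i<N. \<theta>loc t i \<tau> \<omega> - \<theta> t \<omega>))"
    using sq_integrable_local_steps[OF Suc]
    by (intro sq_integrable_add sq_integrable_scaleR sq_integrable_sum sq_integrable_diff) auto
  then show ?case by (simp add: \<theta>_Suc[abs_def])
qed

lemma sq_integrable_\<theta>loc: "i < N \<Longrightarrow> s \<le> \<tau> \<Longrightarrow> sq_integrable M (\<theta>loc t i s)"
  using sq_integrable_local_steps[OF sq_integrable_\<theta>] by blast

lemma sq_integrable_g: "i < N \<Longrightarrow> s < \<tau> \<Longrightarrow> sq_integrable M (g t i s)"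
  using sq_integrable_local_steps[OF sq_integrable_\<theta>, of i \<tau> t] by blast

lemma sq_integrable_gradF_\<theta>loc:
  "i < N \<Longrightarrow> s \<le> \<tau> \<Longrightarrow> sq_integrable M (\<lambda>\<omega>. gradF i (\<theta>loc t i s \<omega>))"
  by (intro sq_integrable_gradF sq_integrable_\<theta>loc)

lemma noise_orthogonal:
  assumes "i < N" "s < \<tau>" "H \<in> borel_measurable (Fpast t s)" "sq_integrable M H"
  shows "(\<integral>\<omega>. H \<omega> \<bullet> noise t i s \<omega> \<partial>M) = 0"
  unfolding noise_def
  by (rule Fpast.integral_inner_diff_cond_exp_eq_0[OF assms(3,4) sq_integrable_g
        sq_integrable_gradF_\<theta>loc cond_exp_g]) (use assms in auto)

lemma noise_orthogonal_steps:
  assumes "i < N" "i' < N" "k < k'" "k' < \<tau>"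
  shows "(\<integral>\<omega>. noise t i k \<omega> \<bullet> noise t i' k' \<omega> \<partial>M) = 0"
  using assms by (intro noise_orthogonal noise_measurable_Fpast sq_integrable_noise) auto

lemma noise_orthogonal_clients:
  assumes "i < N" "i' < N" "i \<noteq> i'" "s < \<tau>"
  shows "(\<integral>\<omega>. noise t i s \<omega> \<bullet> noise t i' s \<omega> \<partial>M) = 0"
  unfolding noise_def
proof (rule Fpast.integral_inner_centered_eq_0_if_cond_indep)
  show "(\<integral>\<omega>. indicator B (g t i s \<omega>) * indicator C (g t i' s \<omega>) \<partial>M) =
      (\<integral>\<omega>. real_cond_exp M (Fpast t s) (\<lambda>\<omega>. indicator B (g t i s \<omega>)) \<omega> *
            real_cond_exp M (Fpast t s) (\<lambda>\<omega>. indicator C (g t i' s \<omega>)) \<omega> \<partial>M)"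
    if "B \<in> sets borel" "C \<in> sets borel" for B C
    using Fpast.cond_indep_vars_pair[of t s "\<lambda>i. g t i s" "{..<N}" i i' B C] g_cindep assms that
    by auto
qed (use assms in \<open>auto intro: sq_integrable_g sq_integrable_gradF_\<theta>loc cond_exp_g
      gradF_\<theta>loc_measurable_Fpast\<close>)

definition "\<alpha> k = momentum_weight \<mu> \<tau> k"

lemma S_eq_sum_\<alpha>: "S = (\<Sum>k<\<tau>. \<alpha> k)"
  unfolding S_def \<alpha>_def using mu by (intro S_tau_eq_sum_momentum_weight) simp

lemma \<alpha>_nonneg: "0 \<le> \<alpha> k"
  unfolding \<alpha>_def using mu by (simp add: momentum_weight_nonneg)

lemma tau_le_S: "real \<tau> \<le> S"
proof -
  have "(\<Sum>k<\<tau>. (1::real)) \<le> (\<Sum>k<\<tau>. \<alpha> k)"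
    by (rule sum_mono) (use mu in \<open>auto simp: \<alpha>_def intro: one_le_momentum_weight\<close>)
  then show ?thesis unfolding S_eq_sum_\<alpha> by simp
qed

lemma S_pos: "S > 0"
  using tau_le_S tau_pos by linarith

lemma S_le: "(1 - \<mu>) * S \<le> real \<tau>"
proof -
  have "S \<le> (\<Sum>k<\<tau>. 1 / (1 - \<mu>))"
    unfolding S_eq_sum_\<alpha> by (rule sum_mono) (use mu in \<open>auto simp: \<alpha>_def intro: momentum_weight_le\<close>)
  then show ?thesis using mu by (simp add: field_simps)
qed

lemma delta_pos: "0 < \<delta>"
  unfolding \<delta>_def by simp

lemma delta_le_1: "\<delta> \<le> 1"
  unfolding \<delta>_def using r_le_d by simp

lemma one_minus_mu2_pos: "0 < 1 - \<mu>\<^sup>2"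
  using power2_lt_one[OF mu] by simp

lemma L_eta_S_le_1: "L * \<eta> * S \<le> 1"
proof -
  have "\<eta> \<le> 1 / (L * S)" using eta_le by simp
  then show ?thesis using L_pos S_pos eta_pos by (simp add: field_simps)
qed

lemma drift_factor_le: "\<eta>\<^sup>2 * L\<^sup>2 * real \<tau> ^ 3 / (1 - \<mu>\<^sup>2) \<le> \<delta> / 48"
proof -
  define q where "q = \<delta> * (1 - \<mu>) * (1 - \<mu>\<^sup>2) * S / (48 * L\<^sup>2 * real \<tau> ^ 4)"
  have "0 \<le> q" unfolding q_def using delta_pos mu S_pos one_minus_mu2_pos by simp
  moreover have "\<eta> \<le> sqrt q" using eta_le unfolding q_def by simp
  then have "\<eta>\<^sup>2 \<le> (sqrt q)\<^sup>2" using eta_pos by (intro power_mono) auto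
  ultimately have "\<eta>\<^sup>2 \<le> q" by simp
  then have "\<eta>\<^sup>2 * L\<^sup>2 * real \<tau> ^ 3 / (1 - \<mu>\<^sup>2) \<le> q * L\<^sup>2 * real \<tau> ^ 3 / (1 - \<mu>\<^sup>2)"
    using one_minus_mu2_pos by (intro divide_right_mono mult_right_mono) auto
  also have "\<dots> = \<delta> * ((1 - \<mu>) * S) / (48 * real \<tau>)"
    unfolding q_def using L_pos tau_pos one_minus_mu2_pos by (simp add: field_simps power_eq_if)
  also have "\<dots> \<le> \<delta> * real \<tau> / (48 * real \<tau>)"
    using S_le delta_pos tau_pos by (intro divide_right_mono mult_left_mono) auto
  finally show ?thesis using tau_pos by simp
qed

definition "noise_avg t \<omega> = (\<Sum>k<\<tau>. \<alpha> k *\<^sub>R ((1 / real N) *\<^sub>R (\<Sum>i<N. noise t i k \<omega>)))"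

lemma noise_avg_eq_sum_pairs:
  "noise_avg t \<omega> = (\<Sum>m\<in>{..<\<tau>} \<times> {..<N}. (\<alpha> (fst m) / real N) *\<^sub>R noise t (snd m) (fst m) \<omega>)"
  unfolding noise_avg_def by (simp add: scaleR_sum_right sum.cartesian_product case_prod_beta)

lemma noise_orthogonal_pairs:
  assumes "m \<in> {..<\<tau>} \<times> {..<N}" "m' \<in> {..<\<tau>} \<times> {..<N}" "m \<noteq> m'"
  shows "(\<integral>\<omega>. noise t (snd m) (fst m) \<omega> \<bullet> noise t (snd m') (fst m') \<omega> \<partial>M) = 0"
proof -
  obtain k i k' i' where m: "m = (k, i)" "m' = (k', i')" by (cases m, cases m')
  consider "k < k'" | "k' < k" | "k = k'" "i \<noteq> i'" using assms m by fastforce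
  then show ?thesis
  proof cases
    case 2
    then show ?thesis using noise_orthogonal_steps[of i' i k' k t] assms m
      by (auto simp: inner_commute)
  qed (use noise_orthogonal_steps noise_orthogonal_clients assms m in auto)
qed

lemma sq_integrable_noise_avg: "sq_integrable M (noise_avg t)"
  unfolding noise_avg_def[abs_def]
  by (intro sq_integrable_sum sq_integrable_scaleR sq_integrable_noise) auto

lemma noise_avg_variance: "(\<integral>\<omega>. (norm (noise_avg t \<omega>))\<^sup>2 \<partial>M) \<le> \<sigma>L\<^sup>2 * S\<^sup>2 / real N"
proof -
  have "(\<integral>\<omega>. (norm (noise_avg t \<omega>))\<^sup>2 \<partial>M) = (\<Sum>m\<in>{..<\<tau>} \<times> {..<N}.
      (\<alpha> (fst m) / real N)\<^sup>2 * (\<integral>\<omega>. (norm (noise t (snd m) (fst m) \<omega>))\<^sup>2 \<partial>M))"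
    unfolding noise_avg_eq_sum_pairs
    by (rule integral_power2_norm_sum_orthogonal)
      (auto intro!: sq_integrable_noise noise_orthogonal_pairs)
  also have "\<dots> \<le> (\<Sum>m\<in>{..<\<tau>} \<times> {..<N}. (\<alpha> (fst m) / real N)\<^sup>2 * \<sigma>L\<^sup>2)"
    by (intro sum_mono mult_left_mono noise_variance(2)) auto
  also have "\<dots> = (\<Sum>k<\<tau>. \<Sum>i<N. (\<alpha> k / real N)\<^sup>2 * \<sigma>L\<^sup>2)"
    by (subst sum.cartesian_product) (simp add: case_prod_beta)
  also have "\<dots> = (\<Sum>k<\<tau>. (\<alpha> k)\<^sup>2) * \<sigma>L\<^sup>2 / real N"
    using N_pos by (simp add: sum_distrib_right power_divide power2_eq_square sum_divide_distrib)
  also have "\<dots> \<le> S\<^sup>2 * \<sigma>L\<^sup>2 / real N"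
    using sum_power2_le_power2_sum[of "{..<\<tau>}" \<alpha>] \<alpha>_nonneg N_pos
    by (intro divide_right_mono mult_right_mono) (auto simp: S_eq_sum_\<alpha>)
  finally show ?thesis by (simp add: mult.commute)
qed

section \<open>Descent along a sample path\<close>

lemma f_has_derivative: "(f has_derivative (\<lambda>h. gradf x \<bullet> h)) (at x)"
proof -
  have "((\<lambda>x. (1 / real N) * (\<Sum>i<N. F i x)) has_derivative
      (\<lambda>h. (1 / real N) * (\<Sum>i<N. gradF i x \<bullet> h))) (at x)"
    using F_diff by (intro has_derivative_mult_right has_derivative_sum) auto
  then show ?thesis unfolding f_def gradf_def by (simp add: inner_sum_left)
qed

lemma f_descent: "f y \<le> f x + gradf x \<bullet> (y - x) + L / 2 * (norm (y - x))\<^sup>2"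
  by (rule descent_lemma[OF f_has_derivative]) (use f_smooth in auto)

definition "grad_err t \<omega> = (\<Sum>k<\<tau>. \<alpha> k *\<^sub>R
    ((1 / real N) *\<^sub>R (\<Sum>i<N. gradF i (\<theta>loc t i k \<omega>) - gradF i (\<theta> t \<omega>))))"

definition "drift t \<omega> = (\<Sum>k<\<tau>. \<alpha> k * ((1 / real N) * (\<Sum>i<N. (norm (\<theta>loc t i k \<omega> - \<theta> t \<omega>))\<^sup>2)))"

lemma \<theta>_Suc_eq_weighted_sum:
  "\<theta> (Suc t) \<omega> = \<theta> t \<omega> - \<eta> *\<^sub>R (Proj t \<omega> *v (\<Sum>k<\<tau>. \<alpha> k *\<^sub>R ((1 / real N) *\<^sub>R (\<Sum>i<N. g t i k \<omega>))))"
proof -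
  have "(\<Sum>i<N. \<theta>loc t i \<tau> \<omega> - \<theta> t \<omega>) = - (\<eta> *\<^sub>R (\<Sum>i<N. \<Sum>k<\<tau>. \<alpha> k *\<^sub>R (Proj t \<omega> *v g t i k \<omega>)))"
    by (simp add: \<theta>loc_eq \<alpha>_def sum_negf scaleR_sum_right)
  also have "\<dots> = - (\<eta> *\<^sub>R (\<Sum>k<\<tau>. \<alpha> k *\<^sub>R (Proj t \<omega> *v (\<Sum>i<N. g t i k \<omega>))))"
    by (simp add: matrix_vector_mult_sum scaleR_sum_right sum.swap[of _ "{..<N}"])
  finally show ?thesis
    unfolding \<theta>_Suc by (simp add: matrix_vector_mult_sum matrix_vector_mult_scaleR scaleR_sum_right)
qed

lemma weighted_sum_g_eq:
  "(\<Sum>k<\<tau>. \<alpha> k *\<^sub>R ((1 / real N) *\<^sub>R (\<Sum>i<N. g t i k \<omega>)))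
    = S *\<^sub>R gradf (\<theta> t \<omega>) + grad_err t \<omega> + noise_avg t \<omega>"
proof -
  have "(1 / real N) *\<^sub>R (\<Sum>i<N. g t i k \<omega>)
      = (1 / real N) *\<^sub>R (\<Sum>i<N. gradF i (\<theta>loc t i k \<omega>) - gradF i (\<theta> t \<omega>)) + gradf (\<theta> t \<omega>)
        + (1 / real N) *\<^sub>R (\<Sum>i<N. noise t i k \<omega>)" for k
  proof -
    have "(\<Sum>i<N. g t i k \<omega>) = (\<Sum>i<N. gradF i (\<theta>loc t i k \<omega>) - gradF i (\<theta> t \<omega>))
        + (\<Sum>i<N. gradF i (\<theta> t \<omega>)) + (\<Sum>i<N. noise t i k \<omega>)"
      by (simp add: g_eq_noise sum.distrib[symmetric] sum_subtractf[symmetric] algebra_simps)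
    then show ?thesis by (simp add: gradf_def scaleR_add_right)
  qed
  then have "(\<Sum>k<\<tau>. \<alpha> k *\<^sub>R ((1 / real N) *\<^sub>R (\<Sum>i<N. g t i k \<omega>)))
      = (\<Sum>k<\<tau>. \<alpha> k *\<^sub>R ((1 / real N) *\<^sub>R (\<Sum>i<N. gradF i (\<theta>loc t i k \<omega>) - gradF i (\<theta> t \<omega>)))
        + \<alpha> k *\<^sub>R gradf (\<theta> t \<omega>) + \<alpha> k *\<^sub>R ((1 / real N) *\<^sub>R (\<Sum>i<N. noise t i k \<omega>)))"
    by (simp only: scaleR_add_right)
  also have "\<dots> = grad_err t \<omega> + S *\<^sub>R gradf (\<theta> t \<omega>) + noise_avg t \<omega>"
    by (simp add: sum.distrib grad_err_def noise_avg_def S_eq_sum_\<alpha> scaleR_sum_left)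
  finally show ?thesis by (simp add: algebra_simps)
qed

lemma power2_norm_grad_err_le: "(norm (grad_err t \<omega>))\<^sup>2 \<le> S * (L\<^sup>2 * drift t \<omega>)"
proof -
  define e where "e k = (1 / real N) *\<^sub>R (\<Sum>i<N. gradF i (\<theta>loc t i k \<omega>) - gradF i (\<theta> t \<omega>))" for k
  have ek: "(norm (e k))\<^sup>2 \<le> L\<^sup>2 * ((1 / real N) * (\<Sum>i<N. (norm (\<theta>loc t i k \<omega> - \<theta> t \<omega>))\<^sup>2))" for k
  proof -
    have "(norm (e k))\<^sup>2 \<le> (1 / real N) * (\<Sum>i<N. (norm (gradF i (\<theta>loc t i k \<omega>) - gradF i (\<theta> t \<omega>)))\<^sup>2)"
      unfolding e_def by (rule power2_norm_mean_le[OF N_pos])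
    also have "\<dots> \<le> (1 / real N) * (\<Sum>i<N. (L * norm (\<theta>loc t i k \<omega> - \<theta> t \<omega>))\<^sup>2)"
      using F_smooth by (intro mult_left_mono sum_mono power_mono) auto
    finally show ?thesis by (simp add: power_mult_distrib sum_distrib_left)
  qed
  have "(norm (grad_err t \<omega>))\<^sup>2 \<le> (\<Sum>k<\<tau>. \<alpha> k) * (\<Sum>k<\<tau>. \<alpha> k * (norm (e k))\<^sup>2)"
    unfolding grad_err_def e_def[symmetric] by (rule power2_norm_sum_scaleR_le) (rule \<alpha>_nonneg)
  also have "\<dots> \<le> S * (\<Sum>k<\<tau>. \<alpha> k * (L\<^sup>2 * ((1 / real N) * (\<Sum>i<N. (norm (\<theta>loc t i k \<omega> - \<theta> t \<omega>))\<^sup>2))))"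
    unfolding S_eq_sum_\<alpha>[symmetric] using S_pos \<alpha>_nonneg ek by (intro mult_left_mono sum_mono) auto
  finally show ?thesis
    unfolding drift_def by (simp add: sum_distrib_left mult.left_commute)
qed

lemma scaled_power2_norm_Proj_grad_err_le:
  assumes "P t \<omega> \<in> stiefel"
  shows "(\<eta> / S) * (norm (Proj t \<omega> *v grad_err t \<omega>))\<^sup>2 \<le> \<eta> * L\<^sup>2 * drift t \<omega>"
proof -
  have "(norm (Proj t \<omega> *v grad_err t \<omega>))\<^sup>2 \<le> S * (L\<^sup>2 * drift t \<omega>)"
    using power_mono[OF norm_proj_of_le[OF assms] norm_ge_zero, of _ 2] power2_norm_grad_err_le
    by (meson order.trans)
  then have "(\<eta> / S) * (norm (Proj t \<omega> *v grad_err t \<omega>))\<^sup>2 \<le> (\<eta> / S) * (S * (L\<^sup>2 * drift t \<omega>))"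
    using eta_pos S_pos by (intro mult_left_mono) auto
  then show ?thesis using S_pos by simp
qed

lemma pathwise_descent:
  assumes st: "P t \<omega> \<in> stiefel"
  defines "U \<equiv> Proj t \<omega> *v gradf (\<theta> t \<omega>)"
  shows "f (\<theta> (Suc t) \<omega>) \<le> f (\<theta> t \<omega>) - (\<eta> * S / 2) * (norm U)\<^sup>2
     + \<eta> * L\<^sup>2 * drift t \<omega> + L * \<eta>\<^sup>2 * (norm (noise_avg t \<omega>))\<^sup>2
     - \<eta> * (1 - L * \<eta> * S) * (U \<bullet> noise_avg t \<omega>)"
proof -
  define V where "V = Proj t \<omega> *v grad_err t \<omega>"
  define W where "W = Proj t \<omega> *v noise_avg t \<omega>"
  have step: "\<theta> (Suc t) \<omega> - \<theta> t \<omega> = - (\<eta> *\<^sub>R (S *\<^sub>R U + V + W))"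
    unfolding \<theta>_Suc_eq_weighted_sum weighted_sum_g_eq U_def V_def W_def
    by (simp add: matrix_vector_right_distrib matrix_vector_mult_scaleR)
  have "gradf (\<theta> t \<omega>) \<bullet> (S *\<^sub>R U + V + W) = U \<bullet> (S *\<^sub>R U + V + W)"
    using inner_proj_of_proj_of[OF st, of "gradf (\<theta> t \<omega>)"
        "S *\<^sub>R gradf (\<theta> t \<omega>) + grad_err t \<omega> + noise_avg t \<omega>"]
    by (simp add: U_def V_def W_def matrix_vector_right_distrib matrix_vector_mult_scaleR)
  then have inner: "gradf (\<theta> t \<omega>) \<bullet> (S *\<^sub>R U + V + W) = S * (norm U)\<^sup>2 + U \<bullet> V + U \<bullet> W"
    by (simp add: inner_add_right power2_norm_eq_inner)
  have V: "(\<eta> / S) * (norm V)\<^sup>2 \<le> \<eta> * L\<^sup>2 * drift t \<omega>"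
    unfolding V_def by (rule scaled_power2_norm_Proj_grad_err_le[OF st])
  have W: "L * \<eta>\<^sup>2 * (norm W)\<^sup>2 \<le> L * \<eta>\<^sup>2 * (norm (noise_avg t \<omega>))\<^sup>2"
    unfolding W_def using L_pos by (intro mult_left_mono power_mono norm_proj_of_le[OF st]) auto
  have UW: "U \<bullet> W = U \<bullet> noise_avg t \<omega>"
    using inner_proj_of_proj_of[OF st, of "noise_avg t \<omega>" "gradf (\<theta> t \<omega>)"]
    by (simp add: U_def W_def inner_commute)
  have "f (\<theta> (Suc t) \<omega>) \<le> f (\<theta> t \<omega>) + gradf (\<theta> t \<omega>) \<bullet> (\<theta> (Suc t) \<omega> - \<theta> t \<omega>)
      + L / 2 * (norm (\<theta> (Suc t) \<omega> - \<theta> t \<omega>))\<^sup>2"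
    by (rule f_descent)
  also have "\<dots> = f (\<theta> t \<omega>) + (- \<eta> * (S * (norm U)\<^sup>2 + U \<bullet> V + U \<bullet> W)
      + L / 2 * (\<eta>\<^sup>2 * (norm (S *\<^sub>R U + V + W))\<^sup>2))"
    unfolding step using eta_pos by (simp add: inner power_mult_distrib)
  also have "\<dots> \<le> f (\<theta> t \<omega>) + (- (\<eta> * S / 2) * (norm U)\<^sup>2 + (\<eta> / S) * (norm V)\<^sup>2
      + L * \<eta>\<^sup>2 * (norm W)\<^sup>2 - \<eta> * (1 - L * \<eta> * S) * (U \<bullet> W))"
    by (intro add_left_mono descent_step S_pos eta_pos L_pos L_eta_S_le_1)
  finally show ?thesis
    using V W unfolding UW by linarith
qed

section \<open>Client drift\<close>

definition "\<beta> = \<eta>\<^sup>2 * (real \<tau>)\<^sup>2 / (1 - \<mu>\<^sup>2)"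

lemma \<beta>_nonneg: "0 \<le> \<beta>"
  unfolding \<beta>_def using one_minus_mu2_pos by simp

definition "step_bound t i j \<omega> = 2 * (norm (noise t i j \<omega>))\<^sup>2
    + 4 * L\<^sup>2 * (norm (\<theta>loc t i j \<omega> - \<theta> t \<omega>))\<^sup>2 + 4 * (norm (gradF i (\<theta> t \<omega>)))\<^sup>2"

lemma power2_norm_g_le: "i < N \<Longrightarrow> (norm (g t i j \<omega>))\<^sup>2 \<le> step_bound t i j \<omega>"
proof -
  assume i: "i < N"
  have "norm (gradF i (\<theta>loc t i j \<omega>)) \<le> norm (gradF i (\<theta>loc t i j \<omega>) - gradF i (\<theta> t \<omega>))
      + norm (gradF i (\<theta> t \<omega>))"
    using norm_triangle_sub[of "gradF i (\<theta>loc t i j \<omega>)" "gradF i (\<theta> t \<omega>)"] by linarith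
  also have "\<dots> \<le> L * norm (\<theta>loc t i j \<omega> - \<theta> t \<omega>) + norm (gradF i (\<theta> t \<omega>))"
    using F_smooth i by (intro add_right_mono) auto
  finally have "(norm (gradF i (\<theta>loc t i j \<omega>)))\<^sup>2
      \<le> (norm (L * norm (\<theta>loc t i j \<omega> - \<theta> t \<omega>) + norm (gradF i (\<theta> t \<omega>))))\<^sup>2"
    by (intro power_mono) auto
  also have "\<dots> \<le> 2 * L\<^sup>2 * (norm (\<theta>loc t i j \<omega> - \<theta> t \<omega>))\<^sup>2 + 2 * (norm (gradF i (\<theta> t \<omega>)))\<^sup>2"
    using power2_norm_add_le[of "L * norm (\<theta>loc t i j \<omega> - \<theta> t \<omega>)" "norm (gradF i (\<theta> t \<omega>))"]
    by (simp add: power_mult_distrib)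
  finally have "(norm (gradF i (\<theta>loc t i j \<omega>)))\<^sup>2
      \<le> 2 * L\<^sup>2 * (norm (\<theta>loc t i j \<omega> - \<theta> t \<omega>))\<^sup>2 + 2 * (norm (gradF i (\<theta> t \<omega>)))\<^sup>2" .
  then show ?thesis
    using power2_norm_add_le[of "noise t i j \<omega>" "gradF i (\<theta>loc t i j \<omega>)"]
    unfolding step_bound_def g_eq_noise[of t i j \<omega>] by (simp add: add.commute)
qed

lemma power2_norm_local_step_le:
  assumes st: "P t \<omega> \<in> stiefel" and "j < k" "k \<le> \<tau>" "i < N"
  shows "(norm (momentum_weight \<mu> k j *\<^sub>R (Proj t \<omega> *v g t i j \<omega>)))\<^sup>2
    \<le> real \<tau> / (1 - \<mu>\<^sup>2) * step_bound t i j \<omega>"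
proof -
  have "(momentum_weight \<mu> k j)\<^sup>2 \<le> real (k - j) / (1 - \<mu>\<^sup>2)"
    using mu by (rule momentum_weight_sq_le)
  also have "\<dots> \<le> real \<tau> / (1 - \<mu>\<^sup>2)"
    using one_minus_mu2_pos assms by (intro divide_right_mono) auto
  finally have "(momentum_weight \<mu> k j)\<^sup>2 * (norm (Proj t \<omega> *v g t i j \<omega>))\<^sup>2
      \<le> real \<tau> / (1 - \<mu>\<^sup>2) * (norm (g t i j \<omega>))\<^sup>2"
    using one_minus_mu2_pos by (intro mult_mono power_mono norm_proj_of_le[OF st]) auto
  also have "\<dots> \<le> real \<tau> / (1 - \<mu>\<^sup>2) * step_bound t i j \<omega>"
    using power2_norm_g_le assms one_minus_mu2_pos by (intro mult_left_mono) auto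
  finally show ?thesis by (simp add: power_mult_distrib)
qed

lemma power2_norm_local_drift_le:
  assumes st: "P t \<omega> \<in> stiefel" and k: "k \<le> \<tau>" and i: "i < N"
  shows "(norm (\<theta>loc t i k \<omega> - \<theta> t \<omega>))\<^sup>2 \<le> \<beta> * (\<Sum>j<k. step_bound t i j \<omega>)"
proof -
  let ?v = "\<lambda>j. momentum_weight \<mu> k j *\<^sub>R (Proj t \<omega> *v g t i j \<omega>)"
  have "(norm (\<theta>loc t i k \<omega> - \<theta> t \<omega>))\<^sup>2 = \<eta>\<^sup>2 * (norm (\<Sum>j<k. ?v j))\<^sup>2"
    unfolding \<theta>loc_eq using eta_pos by (simp add: power_mult_distrib)
  also have "\<dots> \<le> \<eta>\<^sup>2 * (real k * (\<Sum>j<k. (norm (?v j))\<^sup>2))"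
    using power2_norm_sum_le_card[of ?v "{..<k}"] by (intro mult_left_mono) auto
  also have "\<dots> \<le> \<eta>\<^sup>2 * (real \<tau> * (\<Sum>j<k. real \<tau> / (1 - \<mu>\<^sup>2) * step_bound t i j \<omega>))"
    using k power2_norm_local_step_le[OF st _ k i] one_minus_mu2_pos
    by (intro mult_left_mono mult_mono sum_mono sum_nonneg mult_nonneg_nonneg)
      (auto simp: step_bound_def)
  also have "\<dots> = \<beta> * (\<Sum>j<k. step_bound t i j \<omega>)"
    unfolding \<beta>_def by (simp add: sum_distrib_left power2_eq_square field_simps sum_divide_distrib)
  finally show ?thesis .
qed

lemma integrable_step_bound: "i < N \<Longrightarrow> j < \<tau> \<Longrightarrow> integrable M (step_bound t i j)"
  unfolding step_bound_def[abs_def]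
  by (intro Bochner_Integration.integrable_add Bochner_Integration.integrable_mult_right
      sq_integrableD(2) sq_integrable_noise sq_integrable_diff sq_integrable_\<theta>loc sq_integrable_\<theta>
      sq_integrable_gradF) auto

lemma integral_step_bound_le:
  assumes "i < N" "j < \<tau>"
  shows "(\<integral>\<omega>. step_bound t i j \<omega> \<partial>M) \<le> 2 * \<sigma>L\<^sup>2
    + 4 * L\<^sup>2 * (\<integral>\<omega>. (norm (\<theta>loc t i j \<omega> - \<theta> t \<omega>))\<^sup>2 \<partial>M)
    + 4 * (\<integral>\<omega>. (norm (gradF i (\<theta> t \<omega>)))\<^sup>2 \<partial>M)"
proof -
  have "integrable M (\<lambda>\<omega>. (norm (\<theta>loc t i j \<omega> - \<theta> t \<omega>))\<^sup>2)"
    "integrable M (\<lambda>\<omega>. (norm (gradF i (\<theta> t \<omega>)))\<^sup>2)"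
    using assms by (auto intro!: sq_integrableD(2) sq_integrable_diff sq_integrable_\<theta>loc
        sq_integrable_\<theta> sq_integrable_gradF)
  then show ?thesis
    using noise_variance[OF assms, of t] unfolding step_bound_def by simp
qed

lemma expected_local_drift_le:
  assumes k: "k \<le> \<tau>" and i: "i < N"
  shows "(\<integral>\<omega>. (norm (\<theta>loc t i k \<omega> - \<theta> t \<omega>))\<^sup>2 \<partial>M) \<le> \<beta> * (\<Sum>j<k. 2 * \<sigma>L\<^sup>2
      + 4 * L\<^sup>2 * (\<integral>\<omega>. (norm (\<theta>loc t i j \<omega> - \<theta> t \<omega>))\<^sup>2 \<partial>M)
      + 4 * (\<integral>\<omega>. (norm (gradF i (\<theta> t \<omega>)))\<^sup>2 \<partial>M))"
proof -
  have int: "integrable M (step_bound t i j)" if "j < k" for j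
    using integrable_step_bound i k that by simp
  have "(\<integral>\<omega>. (norm (\<theta>loc t i k \<omega> - \<theta> t \<omega>))\<^sup>2 \<partial>M) \<le> (\<integral>\<omega>. \<beta> * (\<Sum>j<k. step_bound t i j \<omega>) \<partial>M)"
  proof (rule integral_mono_AE)
    show "integrable M (\<lambda>\<omega>. (norm (\<theta>loc t i k \<omega> - \<theta> t \<omega>))\<^sup>2)"
      using i k by (intro sq_integrableD(2) sq_integrable_diff sq_integrable_\<theta>loc sq_integrable_\<theta>)
    show "integrable M (\<lambda>\<omega>. \<beta> * (\<Sum>j<k. step_bound t i j \<omega>))"
      using int by auto
    show "AE \<omega> in M. (norm (\<theta>loc t i k \<omega> - \<theta> t \<omega>))\<^sup>2 \<le> \<beta> * (\<Sum>j<k. step_bound t i j \<omega>)"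
      using Pt.AE_in_stiefel[of t] by eventually_elim (rule power2_norm_local_drift_le[OF _ k i])
  qed
  also have "\<dots> = \<beta> * (\<Sum>j<k. (\<integral>\<omega>. step_bound t i j \<omega> \<partial>M))"
    using int by (simp add: Bochner_Integration.integral_sum)
  also have "\<dots> \<le> \<beta> * (\<Sum>j<k. 2 * \<sigma>L\<^sup>2
      + 4 * L\<^sup>2 * (\<integral>\<omega>. (norm (\<theta>loc t i j \<omega> - \<theta> t \<omega>))\<^sup>2 \<partial>M)
      + 4 * (\<integral>\<omega>. (norm (gradF i (\<theta> t \<omega>)))\<^sup>2 \<partial>M))"
    using \<beta>_nonneg i k by (intro mult_left_mono sum_mono integral_step_bound_le) auto
  finally show ?thesis .
qed

definition "mean_drift t k = (1 / real N) * (\<Sum>i<N. (\<integral>\<omega>. (norm (\<theta>loc t i k \<omega> - \<theta> t \<omega>))\<^sup>2 \<partial>M))"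

definition "mean_grad_sq t = (1 / real N) * (\<Sum>i<N. (\<integral>\<omega>. (norm (gradF i (\<theta> t \<omega>)))\<^sup>2 \<partial>M))"

lemma mean_drift_rec:
  assumes "k \<le> \<tau>"
  shows "mean_drift t k \<le> \<beta> * (\<Sum>j<k. 2 * \<sigma>L\<^sup>2 + 4 * L\<^sup>2 * mean_drift t j + 4 * mean_grad_sq t)"
proof -
  have "mean_drift t k \<le> (1 / real N) * (\<Sum>i<N. \<beta> * (\<Sum>j<k. 2 * \<sigma>L\<^sup>2
      + 4 * L\<^sup>2 * (\<integral>\<omega>. (norm (\<theta>loc t i j \<omega> - \<theta> t \<omega>))\<^sup>2 \<partial>M)
      + 4 * (\<integral>\<omega>. (norm (gradF i (\<theta> t \<omega>)))\<^sup>2 \<partial>M)))"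
    unfolding mean_drift_def using assms by (intro mult_left_mono sum_mono expected_local_drift_le) auto
  also have "\<dots> = \<beta> * (\<Sum>j<k. 2 * \<sigma>L\<^sup>2 + 4 * L\<^sup>2 * mean_drift t j + 4 * mean_grad_sq t)"
    unfolding mean_drift_def mean_grad_sq_def using N_pos
    by (simp add: sum.distrib sum_distrib_left sum_distrib_right sum.swap[of _ "{..<N}"]
        field_simps sum_divide_distrib)
  finally show ?thesis .
qed

lemma mean_drift_le: "k \<le> \<tau> \<Longrightarrow> mean_drift t k \<le> 2 * \<beta> * real \<tau> * (2 * \<sigma>L\<^sup>2 + 4 * mean_grad_sq t)"
proof (induction k rule: less_induct)
  case (less k)
  define B where "B = 2 * \<beta> * real \<tau> * (2 * \<sigma>L\<^sup>2 + 4 * mean_grad_sq t)"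
  have "0 \<le> mean_grad_sq t"
    unfolding mean_grad_sq_def by (intro mult_nonneg_nonneg sum_nonneg integral_nonneg_AE) auto
  then have B0: "0 \<le> B" unfolding B_def using \<beta>_nonneg by simp
  have contract: "4 * \<beta> * real \<tau> * L\<^sup>2 \<le> 1 / 2"
  proof -
    have "\<beta> * real \<tau> * L\<^sup>2 = \<eta>\<^sup>2 * L\<^sup>2 * real \<tau> ^ 3 / (1 - \<mu>\<^sup>2)"
      unfolding \<beta>_def by (simp add: power2_eq_square power3_eq_cube)
    then have "\<beta> * real \<tau> * L\<^sup>2 \<le> \<delta> / 48" using drift_factor_le by simp
    then show ?thesis using delta_le_1 by linarith
  qed
  have "mean_drift t k \<le> \<beta> * (\<Sum>j<k. 2 * \<sigma>L\<^sup>2 + 4 * L\<^sup>2 * mean_drift t j + 4 * mean_grad_sq t)"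
    by (rule mean_drift_rec[OF less.prems])
  also have "\<dots> \<le> \<beta> * (\<Sum>j<k. 2 * \<sigma>L\<^sup>2 + 4 * L\<^sup>2 * B + 4 * mean_grad_sq t)"
    using \<beta>_nonneg less.IH less.prems unfolding B_def
    by (intro mult_left_mono sum_mono add_right_mono add_left_mono) auto
  also have "\<dots> = \<beta> * real k * (2 * \<sigma>L\<^sup>2 + 4 * mean_grad_sq t) + (4 * \<beta> * real k * L\<^sup>2) * B"
    by (simp add: algebra_simps)
  also have "\<dots> \<le> \<beta> * real \<tau> * (2 * \<sigma>L\<^sup>2 + 4 * mean_grad_sq t) + (4 * \<beta> * real \<tau> * L\<^sup>2) * B"
    using less.prems \<beta>_nonneg \<open>0 \<le> mean_grad_sq t\<close> B0
    by (intro add_mono mult_right_mono mult_left_mono) auto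
  also have "\<dots> \<le> \<beta> * real \<tau> * (2 * \<sigma>L\<^sup>2 + 4 * mean_grad_sq t) + (1 / 2) * B"
    using contract B0 by (intro add_left_mono mult_right_mono) auto
  also have "\<dots> = B" unfolding B_def by simp
  finally show ?case unfolding B_def .
qed

lemma mean_grad_sq_le: "mean_grad_sq t \<le> (\<integral>\<omega>. (norm (gradf (\<theta> t \<omega>)))\<^sup>2 \<partial>M) + \<sigma>G\<^sup>2"
proof -
  have int: "integrable M (\<lambda>\<omega>. (norm (gradF i (\<theta> t \<omega>)))\<^sup>2)" if "i < N" for i
    using that by (intro sq_integrableD(2) sq_integrable_gradF sq_integrable_\<theta>)
  have "(1 / real N) * (\<Sum>i<N. (norm (gradF i (\<theta> t \<omega>)))\<^sup>2) \<le> (norm (gradf (\<theta> t \<omega>)))\<^sup>2 + \<sigma>G\<^sup>2" for \<omega>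
  proof -
    have "(1 / real N) * (\<Sum>i<N. (norm (gradF i (\<theta> t \<omega>)))\<^sup>2) = (norm (gradf (\<theta> t \<omega>)))\<^sup>2
        + (1 / real N) * (\<Sum>i<N. (norm (gradF i (\<theta> t \<omega>) - gradf (\<theta> t \<omega>)))\<^sup>2)"
      unfolding gradf_def by (rule mean_power2_norm_eq[OF N_pos])
    also have "\<dots> \<le> (norm (gradf (\<theta> t \<omega>)))\<^sup>2 + (1 / real N) * (\<Sum>i<N. \<sigma>G\<^sup>2)"
      using hetero by (intro add_left_mono mult_left_mono sum_mono) auto
    finally show ?thesis using N_pos by simp
  qed
  moreover have "integrable M (\<lambda>\<omega>. (1 / real N) * (\<Sum>i<N. (norm (gradF i (\<theta> t \<omega>)))\<^sup>2))"
    using int by (intro Bochner_Integration.integrable_mult_right Bochner_Integration.integrable_sum) auto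
  ultimately have "(\<integral>\<omega>. (1 / real N) * (\<Sum>i<N. (norm (gradF i (\<theta> t \<omega>)))\<^sup>2) \<partial>M)
      \<le> (\<integral>\<omega>. (norm (gradf (\<theta> t \<omega>)))\<^sup>2 + \<sigma>G\<^sup>2 \<partial>M)"
    using sq_integrableD(2)[OF sq_integrable_gradf[OF sq_integrable_\<theta>]] by (intro integral_mono) auto
  moreover have "(\<integral>\<omega>. (1 / real N) * (\<Sum>i<N. (norm (gradF i (\<theta> t \<omega>)))\<^sup>2) \<partial>M) = mean_grad_sq t"
    unfolding mean_grad_sq_def integral_mult_right_zero using int by (simp add: Bochner_Integration.integral_sum)
  ultimately show ?thesis
    using sq_integrableD(2)[OF sq_integrable_gradf[OF sq_integrable_\<theta>]] by (simp add: prob_space)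
qed

lemma integrable_drift: "integrable M (drift t)"
  unfolding drift_def[abs_def]
  by (intro Bochner_Integration.integrable_sum Bochner_Integration.integrable_mult_right
      sq_integrableD(2) sq_integrable_diff sq_integrable_\<theta>loc sq_integrable_\<theta>) auto

lemma expected_drift_le:
  "(\<integral>\<omega>. drift t \<omega> \<partial>M) \<le> S * (2 * \<beta> * real \<tau> * (2 * \<sigma>L\<^sup>2 + 4 * mean_grad_sq t))"
proof -
  have int: "integrable M (\<lambda>\<omega>. (norm (\<theta>loc t i k \<omega> - \<theta> t \<omega>))\<^sup>2)" if "i < N" "k < \<tau>" for i k
    using that by (intro sq_integrableD(2) sq_integrable_diff sq_integrable_\<theta>loc sq_integrable_\<theta>) auto
  have "(\<integral>\<omega>. drift t \<omega> \<partial>M)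
      = (\<Sum>k<\<tau>. (\<integral>\<omega>. \<alpha> k * ((1 / real N) * (\<Sum>i<N. (norm (\<theta>loc t i k \<omega> - \<theta> t \<omega>))\<^sup>2)) \<partial>M))"
    unfolding drift_def using int
    by (intro Bochner_Integration.integral_sum Bochner_Integration.integrable_mult_right
        Bochner_Integration.integrable_sum) auto
  also have "\<dots> = (\<Sum>k<\<tau>. \<alpha> k * mean_drift t k)"
    unfolding integral_mult_right_zero mean_drift_def using int
    by (intro sum.cong refl) (simp add: Bochner_Integration.integral_sum)
  also have "\<dots> \<le> (\<Sum>k<\<tau>. \<alpha> k * (2 * \<beta> * real \<tau> * (2 * \<sigma>L\<^sup>2 + 4 * mean_grad_sq t)))"
    using \<alpha>_nonneg by (intro sum_mono mult_left_mono mean_drift_le) auto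
  finally show ?thesis
    by (simp add: S_eq_sum_\<alpha> sum_distrib_right)
qed

section \<open>Expected decrease and the rate\<close>

lemma f_measurable: "f \<in> borel_measurable borel"
  by (intro borel_measurable_continuous_onI continuous_at_imp_continuous_on ballI
      has_derivative_continuous[OF f_has_derivative])

lemma abs_f_le: "\<bar>f x\<bar> \<le> \<bar>fstar\<bar> + \<bar>f 0\<bar> + norm (gradf 0) + norm (gradf 0) * (norm x)\<^sup>2
    + L / 2 * (norm x)\<^sup>2"
proof -
  have "2 * norm x \<le> (norm x)\<^sup>2 + 1" using sum_squares_bound[of "norm x" 1] by simp
  then have "norm x \<le> 1 + (norm x)\<^sup>2" using norm_ge_zero[of x] by linarith
  then have "gradf 0 \<bullet> x \<le> norm (gradf 0) * (1 + (norm x)\<^sup>2)"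
    using norm_cauchy_schwarz[of "gradf 0" x] mult_left_mono[of _ _ "norm (gradf 0)"]
    by (meson norm_ge_zero order.trans)
  then have "gradf 0 \<bullet> x \<le> norm (gradf 0) + norm (gradf 0) * (norm x)\<^sup>2"
    by (simp add: distrib_left)
  moreover have "f x \<le> f 0 + gradf 0 \<bullet> x + L / 2 * (norm x)\<^sup>2"
    using f_descent[of x 0] by simp
  moreover have "fstar \<le> f x" using f_lower by auto
  moreover have "0 \<le> norm (gradf 0) * (norm x)\<^sup>2" "0 \<le> L / 2 * (norm x)\<^sup>2" using L_pos by simp_all
  ultimately show ?thesis
    using abs_ge_self[of fstar] abs_ge_minus_self[of fstar] abs_ge_self[of "f 0"]
      abs_ge_minus_self[of "f 0"] norm_ge_zero[of "gradf 0"]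
    unfolding abs_le_iff by (intro conjI) linarith+
qed

lemma integrable_f: "sq_integrable M X \<Longrightarrow> integrable M (\<lambda>\<omega>. f (X \<omega>))"
proof (rule Bochner_Integration.integrable_bound)
  assume X: "sq_integrable M X"
  show "integrable M (\<lambda>\<omega>. \<bar>fstar\<bar> + \<bar>f 0\<bar> + norm (gradf 0) + norm (gradf 0) * (norm (X \<omega>))\<^sup>2
      + L / 2 * (norm (X \<omega>))\<^sup>2)"
    using sq_integrableD(2)[OF X] by auto
  show "(\<lambda>\<omega>. f (X \<omega>)) \<in> borel_measurable M"
    using measurable_compose[OF sq_integrableD(1)[OF X] f_measurable] .
  show "AE \<omega> in M. norm (f (X \<omega>))
      \<le> norm (\<bar>fstar\<bar> + \<bar>f 0\<bar> + norm (gradf 0) + norm (gradf 0) * (norm (X \<omega>))\<^sup>2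
      + L / 2 * (norm (X \<omega>))\<^sup>2)"
    using abs_f_le by (intro AE_I2) (auto intro: order_trans[OF _ abs_ge_self])
qed

lemma sq_integrable_Proj_gradf: "sq_integrable M (\<lambda>\<omega>. Proj t \<omega> *v gradf (\<theta> t \<omega>))"
  by (intro sq_integrable_Proj sq_integrable_gradf sq_integrable_\<theta>)

lemma expected_power2_norm_Proj_gradf:
  "(\<integral>\<omega>. (norm (Proj t \<omega> *v gradf (\<theta> t \<omega>)))\<^sup>2 \<partial>M) = \<delta> * (\<integral>\<omega>. (norm (gradf (\<theta> t \<omega>)))\<^sup>2 \<partial>M)"
  unfolding \<delta>_def
  by (rule Pt.integral_power2_norm_proj_of[OF subalgebra_Fpre])
    (use P_indep measurable_compose[OF \<theta>_measurable_Fpre gradf_measurable] in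
      \<open>auto intro: sq_integrable_gradf sq_integrable_\<theta>\<close>)

lemma expected_Proj_gradf_noise_avg: "(\<integral>\<omega>. (Proj t \<omega> *v gradf (\<theta> t \<omega>)) \<bullet> noise_avg t \<omega> \<partial>M) = 0"
proof -
  let ?U = "\<lambda>\<omega>. Proj t \<omega> *v gradf (\<theta> t \<omega>)"
  have zero: "(\<integral>\<omega>. ?U \<omega> \<bullet> noise t i k \<omega> \<partial>M) = 0" if "k < \<tau>" "i < N" for i k
  proof (rule noise_orthogonal[OF that(2,1) _ sq_integrable_Proj_gradf])
    show "?U \<in> borel_measurable (Fpast t k)"
      using P_measurable_Fpast[of t t k] measurable_compose[OF \<theta>_measurable_Fpast gradf_measurable]
      by measurable
  qed
  have "(\<integral>\<omega>. ?U \<omega> \<bullet> noise_avg t \<omega> \<partial>M) = (\<Sum>m\<in>{..<\<tau>} \<times> {..<N}.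
      (\<integral>\<omega>. (\<alpha> (fst m) / real N) * (?U \<omega> \<bullet> noise t (snd m) (fst m) \<omega>) \<partial>M))"
    unfolding noise_avg_eq_sum_pairs inner_sum_right inner_scaleR_right
    by (rule Bochner_Integration.integral_sum)
      (auto intro!: Bochner_Integration.integrable_mult_right integrable_inner
        sq_integrable_Proj_gradf sq_integrable_noise)
  also have "\<dots> = 0"
    using zero by (intro sum.neutral) auto
  finally show ?thesis .
qed

lemma expected_descent:
  "(\<integral>\<omega>. f (\<theta> (Suc t) \<omega>) \<partial>M) \<le> (\<integral>\<omega>. f (\<theta> t \<omega>) \<partial>M)
    - (\<eta> * S / 2) * (\<integral>\<omega>. (norm (Proj t \<omega> *v gradf (\<theta> t \<omega>)))\<^sup>2 \<partial>M)
    + \<eta> * L\<^sup>2 * (\<integral>\<omega>. drift t \<omega> \<partial>M) + L * \<eta>\<^sup>2 * (\<integral>\<omega>. (norm (noise_avg t \<omega>))\<^sup>2 \<partial>M)"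
proof -
  let ?U = "\<lambda>\<omega>. Proj t \<omega> *v gradf (\<theta> t \<omega>)"
  have int: "integrable M (\<lambda>\<omega>. f (\<theta> t \<omega>))" "integrable M (\<lambda>\<omega>. (norm (?U \<omega>))\<^sup>2)"
    "integrable M (drift t)" "integrable M (\<lambda>\<omega>. (norm (noise_avg t \<omega>))\<^sup>2)"
    "integrable M (\<lambda>\<omega>. ?U \<omega> \<bullet> noise_avg t \<omega>)"
    by (auto intro!: integrable_f sq_integrable_\<theta> sq_integrableD(2) sq_integrable_Proj_gradf
        integrable_drift sq_integrable_noise_avg integrable_inner)
  have "(\<integral>\<omega>. f (\<theta> (Suc t) \<omega>) \<partial>M) \<le> (\<integral>\<omega>. f (\<theta> t \<omega>) - (\<eta> * S / 2) * (norm (?U \<omega>))\<^sup>2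
     + \<eta> * L\<^sup>2 * drift t \<omega> + L * \<eta>\<^sup>2 * (norm (noise_avg t \<omega>))\<^sup>2
     - \<eta> * (1 - L * \<eta> * S) * (?U \<omega> \<bullet> noise_avg t \<omega>) \<partial>M)"
  proof (rule integral_mono_AE)
    show "integrable M (\<lambda>\<omega>. f (\<theta> (Suc t) \<omega>))" by (intro integrable_f sq_integrable_\<theta>)
    show "AE \<omega> in M. f (\<theta> (Suc t) \<omega>) \<le> f (\<theta> t \<omega>) - (\<eta> * S / 2) * (norm (?U \<omega>))\<^sup>2
       + \<eta> * L\<^sup>2 * drift t \<omega> + L * \<eta>\<^sup>2 * (norm (noise_avg t \<omega>))\<^sup>2
       - \<eta> * (1 - L * \<eta> * S) * (?U \<omega> \<bullet> noise_avg t \<omega>)"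
      using Pt.AE_in_stiefel[of t] by eventually_elim (rule pathwise_descent)
  qed (use int in auto)
  also have "\<dots> = (\<integral>\<omega>. f (\<theta> t \<omega>) \<partial>M) - (\<eta> * S / 2) * (\<integral>\<omega>. (norm (?U \<omega>))\<^sup>2 \<partial>M)
     + \<eta> * L\<^sup>2 * (\<integral>\<omega>. drift t \<omega> \<partial>M) + L * \<eta>\<^sup>2 * (\<integral>\<omega>. (norm (noise_avg t \<omega>))\<^sup>2 \<partial>M)
     - \<eta> * (1 - L * \<eta> * S) * (\<integral>\<omega>. ?U \<omega> \<bullet> noise_avg t \<omega> \<partial>M)"
    using int by simp
  finally show ?thesis by (simp add: expected_Proj_gradf_noise_avg)
qed

definition "grad_sq t = (\<integral>\<omega>. (norm (gradf (\<theta> t \<omega>)))\<^sup>2 \<partial>M)"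

definition "round_const = \<eta> * L\<^sup>2 * (S * (2 * \<beta> * real \<tau> * (2 * \<sigma>L\<^sup>2 + 4 * \<sigma>G\<^sup>2)))
    + L * \<eta>\<^sup>2 * (\<sigma>L\<^sup>2 * S\<^sup>2 / real N)"

lemma grad_sq_nonneg: "0 \<le> grad_sq t"
  unfolding grad_sq_def by (intro integral_nonneg_AE) auto

lemma expected_round_decrease:
  "(\<integral>\<omega>. f (\<theta> (Suc t) \<omega>) \<partial>M) \<le> (\<integral>\<omega>. f (\<theta> t \<omega>) \<partial>M) - (\<eta> * S * \<delta> / 3) * grad_sq t + round_const"
proof -
  have "S * (2 * \<beta> * real \<tau> * (2 * \<sigma>L\<^sup>2 + 4 * mean_grad_sq t))
      \<le> S * (2 * \<beta> * real \<tau> * (2 * \<sigma>L\<^sup>2 + 4 * (grad_sq t + \<sigma>G\<^sup>2)))"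
    using mean_grad_sq_le[of t] S_pos \<beta>_nonneg unfolding grad_sq_def by (intro mult_left_mono) auto
  then have "(\<integral>\<omega>. drift t \<omega> \<partial>M) \<le> S * (2 * \<beta> * real \<tau> * (2 * \<sigma>L\<^sup>2 + 4 * (grad_sq t + \<sigma>G\<^sup>2)))"
    using expected_drift_le[of t] by linarith
  then have drift: "\<eta> * L\<^sup>2 * (\<integral>\<omega>. drift t \<omega> \<partial>M)
      \<le> \<eta> * L\<^sup>2 * (S * (2 * \<beta> * real \<tau> * (2 * \<sigma>L\<^sup>2 + 4 * (grad_sq t + \<sigma>G\<^sup>2))))"
    using eta_pos by (intro mult_left_mono) auto
  have noise: "L * \<eta>\<^sup>2 * (\<integral>\<omega>. (norm (noise_avg t \<omega>))\<^sup>2 \<partial>M) \<le> L * \<eta>\<^sup>2 * (\<sigma>L\<^sup>2 * S\<^sup>2 / real N)"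
    using noise_avg_variance[of t] L_pos by (intro mult_left_mono) (auto simp: mult.commute)
  have "(\<integral>\<omega>. f (\<theta> (Suc t) \<omega>) \<partial>M) \<le> (\<integral>\<omega>. f (\<theta> t \<omega>) \<partial>M) - (\<eta> * S / 2) * (\<delta> * grad_sq t)
      + \<eta> * L\<^sup>2 * (S * (2 * \<beta> * real \<tau> * (2 * \<sigma>L\<^sup>2 + 4 * (grad_sq t + \<sigma>G\<^sup>2))))
      + L * \<eta>\<^sup>2 * (\<sigma>L\<^sup>2 * S\<^sup>2 / real N)"
    using expected_descent[of t] drift noise
    unfolding expected_power2_norm_Proj_gradf grad_sq_def by linarith
  also have "\<dots> = (\<integral>\<omega>. f (\<theta> t \<omega>) \<partial>M) - (\<eta> * S * \<delta> / 2) * grad_sq t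
      + 8 * (\<eta> * S) * (\<beta> * real \<tau> * L\<^sup>2) * grad_sq t + round_const"
    unfolding round_const_def by algebra
  also have "\<dots> \<le> (\<integral>\<omega>. f (\<theta> t \<omega>) \<partial>M) - (\<eta> * S * \<delta> / 3) * grad_sq t + round_const"
  proof -
    have "\<beta> * real \<tau> * L\<^sup>2 = \<eta>\<^sup>2 * L\<^sup>2 * real \<tau> ^ 3 / (1 - \<mu>\<^sup>2)"
      unfolding \<beta>_def by (simp add: power2_eq_square power3_eq_cube)
    then have "8 * (\<eta> * S) * (\<beta> * real \<tau> * L\<^sup>2) * grad_sq t \<le> 8 * (\<eta> * S) * (\<delta> / 48) * grad_sq t"
      using drift_factor_le eta_pos S_pos grad_sq_nonneg by (intro mult_right_mono mult_left_mono) auto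
    then show ?thesis by (simp add: field_simps)
  qed
  finally show ?thesis .
qed

lemma telescoping:
  "(\<integral>\<omega>. f (\<theta> T \<omega>) \<partial>M) \<le> f th0 - (\<eta> * S * \<delta> / 3) * (\<Sum>t<T. grad_sq t) + real T * round_const"
proof (induction T)
  case 0
  then show ?case by (simp add: \<theta>_0 prob_space)
next
  case (Suc T)
  then show ?case using expected_round_decrease[of T] by (simp add: algebra_simps)
qed

lemma round_const_le:
  "round_const / (\<eta> * S * \<delta> / 3) \<le> 4 * \<eta> * S * L * \<sigma>L\<^sup>2 / (\<delta> * real N)
    + 48 * \<eta>\<^sup>2 * real \<tau> ^ 4 * L\<^sup>2 / (\<delta>\<^sup>2 * (1 - \<mu>) * (1 - \<mu>\<^sup>2) * S) * (\<sigma>L\<^sup>2 + \<sigma>G\<^sup>2)"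
proof -
  define \<kappa> where "\<kappa> = \<beta> * real \<tau> * L\<^sup>2"
  have \<kappa>: "\<kappa> = \<eta>\<^sup>2 * L\<^sup>2 * real \<tau> ^ 3 / (1 - \<mu>\<^sup>2)" "0 \<le> \<kappa>"
    unfolding \<kappa>_def \<beta>_def using one_minus_mu2_pos by (simp_all add: power2_eq_square power3_eq_cube)
  have m1: "0 < 1 - \<mu>" using mu by simp
  have split: "round_const / (\<eta> * S * \<delta> / 3)
      = 6 * \<kappa> * (2 * \<sigma>L\<^sup>2 + 4 * \<sigma>G\<^sup>2) / \<delta> + 3 * L * \<eta> * S * \<sigma>L\<^sup>2 / (\<delta> * real N)"
    unfolding round_const_def \<kappa>_def using eta_pos S_pos delta_pos N_pos
    by (simp add: field_simps power2_eq_square)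
  have "3 * L * \<eta> * S * \<sigma>L\<^sup>2 / (\<delta> * real N) \<le> 4 * \<eta> * S * L * \<sigma>L\<^sup>2 / (\<delta> * real N)"
    using eta_pos S_pos delta_pos N_pos L_pos by (intro divide_right_mono) (auto simp: field_simps)
  moreover have "6 * \<kappa> * (2 * \<sigma>L\<^sup>2 + 4 * \<sigma>G\<^sup>2) / \<delta> \<le> 24 * \<kappa> * (\<sigma>L\<^sup>2 + \<sigma>G\<^sup>2) / \<delta>"
    using \<kappa>(2) delta_pos by (intro divide_right_mono) (auto simp: algebra_simps intro!: mult_left_mono)
  moreover have "24 * \<kappa> * (\<sigma>L\<^sup>2 + \<sigma>G\<^sup>2) / \<delta>
      \<le> 24 * \<kappa> * (\<sigma>L\<^sup>2 + \<sigma>G\<^sup>2) / \<delta> * (2 * real \<tau> / (\<delta> * ((1 - \<mu>) * S)))"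
  proof -
    have "1 \<le> 2 * real \<tau> / (\<delta> * ((1 - \<mu>) * S))"
      using mult_mono[OF delta_le_1 S_le] delta_pos m1 S_pos by (simp add: field_simps)
    moreover have "0 \<le> 24 * \<kappa> * (\<sigma>L\<^sup>2 + \<sigma>G\<^sup>2) / \<delta>" using \<kappa>(2) delta_pos by simp
    ultimately show ?thesis using mult_left_mono by fastforce
  qed
  moreover have "\<dots> = 48 * \<eta>\<^sup>2 * real \<tau> ^ 4 * L\<^sup>2 / (\<delta>\<^sup>2 * (1 - \<mu>) * (1 - \<mu>\<^sup>2) * S) * (\<sigma>L\<^sup>2 + \<sigma>G\<^sup>2)"
    unfolding \<kappa>(1) using m1 one_minus_mu2_pos delta_pos S_pos
    by (simp add: field_simps power2_eq_square power3_eq_cube power4_eq_xxxx)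
  ultimately show ?thesis unfolding split by linarith
qed

lemma average_grad_sq_le:
  assumes T: "T \<ge> 1"
  shows "(1 / real T) * (\<Sum>t<T. grad_sq t)
     \<le> 4 * (f th0 - fstar) / (\<delta> * \<eta> * S * real T)
       + 4 * \<eta> * S * L * \<sigma>L\<^sup>2 / (\<delta> * real N)
       + 48 * \<eta>\<^sup>2 * real \<tau> ^ 4 * L\<^sup>2 / (\<delta>\<^sup>2 * (1 - \<mu>) * (1 - \<mu>\<^sup>2) * S) * (\<sigma>L\<^sup>2 + \<sigma>G\<^sup>2)"
proof -
  define c where "c = \<eta> * S * \<delta> / 3"
  have c: "0 < c" unfolding c_def using eta_pos S_pos delta_pos by simp
  have "fstar \<le> (\<integral>\<omega>. f (\<theta> T \<omega>) \<partial>M)"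
    using f_lower integrable_f[OF sq_integrable_\<theta>] integral_mono[of M "\<lambda>_. fstar" "\<lambda>\<omega>. f (\<theta> T \<omega>)"]
    by (simp add: prob_space)
  then have "c * (\<Sum>t<T. grad_sq t) \<le> f th0 - fstar + real T * round_const"
    using telescoping[of T] unfolding c_def by linarith
  then have "(\<Sum>t<T. grad_sq t) \<le> (f th0 - fstar + real T * round_const) / c"
    using c by (simp add: pos_le_divide_eq mult.commute)
  then have "(1 / real T) * (\<Sum>t<T. grad_sq t) \<le> (1 / real T) * ((f th0 - fstar + real T * round_const) / c)"
    by (intro mult_left_mono) auto
  also have "\<dots> = (f th0 - fstar) / (c * real T) + round_const / c"
    using c T by (simp add: field_simps)
  finally have "(1 / real T) * (\<Sum>t<T. grad_sq t) \<le> (f th0 - fstar) / (c * real T) + round_const / c" .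
  moreover have "(f th0 - fstar) / (c * real T) \<le> 4 * (f th0 - fstar) / (\<delta> * \<eta> * S * real T)"
    unfolding c_def using f_lower eta_pos S_pos delta_pos T by (simp add: field_simps)
  ultimately show ?thesis using round_const_le unfolding c_def by linarith
qed

lemma average_expected_grad_sq_le:
  assumes "T \<ge> 1"
  shows "ennreal (1 / real T) * (\<Sum>t<T. \<integral>\<^sup>+ \<omega>. ennreal ((norm (gradf (\<theta> t \<omega>)))\<^sup>2) \<partial>M)
    \<le> ennreal (4 * (f th0 - fstar) / (\<delta> * \<eta> * S * real T)
       + 4 * \<eta> * S * L * \<sigma>L\<^sup>2 / (\<delta> * real N)
       + 48 * \<eta>\<^sup>2 * real \<tau> ^ 4 * L\<^sup>2 / (\<delta>\<^sup>2 * (1 - \<mu>) * (1 - \<mu>\<^sup>2) * S) * (\<sigma>L\<^sup>2 + \<sigma>G\<^sup>2))"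
proof -
  have "(\<integral>\<^sup>+ \<omega>. ennreal ((norm (gradf (\<theta> t \<omega>)))\<^sup>2) \<partial>M) = ennreal (grad_sq t)" for t
    unfolding grad_sq_def
    by (intro nn_integral_eq_integral sq_integrableD(2) sq_integrable_gradf sq_integrable_\<theta>) auto
  then have "ennreal (1 / real T) * (\<Sum>t<T. \<integral>\<^sup>+ \<omega>. ennreal ((norm (gradf (\<theta> t \<omega>)))\<^sup>2) \<partial>M)
      = ennreal (1 / real T) * ennreal (\<Sum>t<T. grad_sq t)"
    using grad_sq_nonneg by (simp add: sum_ennreal)
  also have "\<dots> = ennreal ((1 / real T) * (\<Sum>t<T. grad_sq t))"
    using grad_sq_nonneg by (intro ennreal_mult''[symmetric] sum_nonneg) auto
  finally show ?thesis using average_grad_sq_le[OF assms] by (simp add: ennreal_leI)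
qed

end

theorem theorem1:
  fixes M :: "'w measure"
    and P :: "nat \<Rightarrow> 'w \<Rightarrow> real^'r^'d"
    and g :: "nat \<Rightarrow> nat \<Rightarrow> nat \<Rightarrow> 'w \<Rightarrow> real^'d"
    and F :: "nat \<Rightarrow> real^'d \<Rightarrow> real"
    and gradF :: "nat \<Rightarrow> real^'d \<Rightarrow> real^'d"
    and th0 :: "real^'d"
    and \<mu> \<eta> L \<sigma>L \<sigma>G fstar :: real
    and N \<tau> :: nat
  defines "f \<equiv> \<lambda>x. (1 / real N) * (\<Sum>i<N. F i x)"
    and "gradf \<equiv> \<lambda>x. (1 / real N) *\<^sub>R (\<Sum>i<N. gradF i x)"
    and "\<delta> \<equiv> real CARD('r) / real CARD('d)"
    and "S \<equiv> S_tau \<mu> \<tau>"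
    and "\<theta> \<equiv> \<lambda>t \<omega>. server_iter \<mu> \<eta> N \<tau> th0 (\<lambda>t. P t \<omega>) (\<lambda>t i s. g t i s \<omega>) t"
    and "\<theta>loc \<equiv> \<lambda>t i s \<omega>. client_iter \<mu> \<eta> N \<tau> th0 (\<lambda>t. P t \<omega>) (\<lambda>t i s. g t i s \<omega>) t i s"
    and "Fpast \<equiv> \<lambda>t s. past_alg M N \<tau> P g t s"
  assumes N_pos: "N \<ge> 1" and tau_pos: "\<tau> \<ge> 1"
    and r_le_d: "CARD('r) \<le> CARD('d)"
    and mu: "0 \<le> \<mu>" "\<mu> < 1" and eta_pos: "\<eta> > 0" and L_pos: "L > 0"
    \<comment> \<open>Assumption A1\<close>
    and F_diff: "\<forall>i<N. \<forall>x. (F i has_derivative (\<lambda>h. gradF i x \<bullet> h)) (at x)"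
    and f_lower: "\<forall>x. fstar \<le> f x"
    and f_smooth: "\<forall>x y. norm (gradf x - gradf y) \<le> L * norm (x - y)"
    and F_smooth: "\<forall>i<N. \<forall>x y. norm (gradF i x - gradF i y) \<le> L * norm (x - y)"
    \<comment> \<open>Assumption A2: bounded heterogeneity\<close>
    and hetero: "\<forall>i<N. \<forall>x. (norm (gradF i x - gradf x))\<^sup>2 \<le> \<sigma>G\<^sup>2"
    \<comment> \<open>probability space carrying all randomness of the algorithm\<close>
    and prob: "prob_space M"
    and P_meas: "\<forall>t. P t \<in> borel_measurable M"
    and g_meas: "\<forall>t i s. g t i s \<in> borel_measurable M"
    \<comment> \<open>P_t is Haar on St(d,r) and independent of all earlier randomness\<close>
    and P_haar: "\<forall>t. haar_stiefel (distr M borel (P t))"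
    and P_indep: "\<forall>t. \<forall>A \<in> sets (pre_round_alg M N \<tau> P g t). \<forall>B \<in> sets borel.
         measure M (A \<inter> (P t -` B \<inter> space M)) = measure M A * measure M (P t -` B \<inter> space M)"
    \<comment> \<open>Assumption A2: conditionally unbiased stochastic gradients\<close>
    and g_unbiased: "\<forall>t. \<forall>i<N. \<forall>s<\<tau>. (\<forall>j. integrable M (\<lambda>\<omega>. g t i s \<omega> $ j)) \<and>
         (AE \<omega> in M. \<forall>j. real_cond_exp M (Fpast t s) (\<lambda>\<omega>. g t i s \<omega> $ j) \<omega> = gradF i (\<theta>loc t i s \<omega>) $ j)"
    \<comment> \<open>Assumption A2: conditional variance bound\<close>
    and g_var: "\<forall>t. \<forall>i<N. \<forall>s<\<tau>. AE \<omega> in M.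
         nn_cond_exp M (Fpast t s) (\<lambda>\<omega>. ennreal ((norm (g t i s \<omega> - gradF i (\<theta>loc t i s \<omega>)))\<^sup>2)) \<omega>
           \<le> ennreal (\<sigma>L\<^sup>2)"
    \<comment> \<open>Assumption A2: conditional independence across clients\<close>
    and g_cindep: "\<forall>t. \<forall>s<\<tau>. cond_indep_vars M (Fpast t s) (\<lambda>i. g t i s) {..<N}"
    \<comment> \<open>stepsize condition\<close>
    and eta_le: "\<eta> \<le> min (sqrt ((1 - \<mu>\<^sup>2) / (6 * L\<^sup>2 * real \<tau> ^ 3)))
                   (min (1 / (L * S))
                        (sqrt (\<delta> * (1 - \<mu>) * (1 - \<mu>\<^sup>2) * S / (48 * L\<^sup>2 * real \<tau> ^ 4))))"
  shows "\<forall>T::nat. T \<ge> 1 \<longrightarrow>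
     ennreal (1 / real T) * (\<Sum>t<T. \<integral>\<^sup>+ \<omega>. ennreal ((norm (gradf (\<theta> t \<omega>)))\<^sup>2) \<partial>M)
       \<le> ennreal (4 * (f th0 - fstar) / (\<delta> * \<eta> * S * real T)
                 + 4 * \<eta> * S * L * \<sigma>L\<^sup>2 / (\<delta> * real N)
                 + 48 * \<eta>\<^sup>2 * real \<tau> ^ 4 * L\<^sup>2 / (\<delta>\<^sup>2 * (1 - \<mu>) * (1 - \<mu>\<^sup>2) * S)
                   * (\<sigma>L\<^sup>2 + \<sigma>G\<^sup>2))"
proof -
  interpret fedslop M P g F gradF th0 \<mu> \<eta> L \<sigma>L \<sigma>G fstar N \<tau> f gradf \<delta> S \<theta> \<theta>loc Fpast
    by (rule fedslop.intro)
      (rule assms | simp only: f_def gradf_def \<delta>_def S_def \<theta>_def \<theta>loc_def Fpast_def)+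
  show ?thesis using average_expected_grad_sq_le by blast
qed

end
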